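(* Let $(u_\beta)_{\beta<\alpha}$, with $\alpha\ge1$, be a densely non-increasing sequence of prime words. Then $u_0$ is the longest prime prefix of the product $\prod_{\beta<\alpha}u_\beta$.
   Context: $A$ is a finite alphabet with a linear order $<_A$. Words are sequences of letters indexed by countable ordinals; $\prod$ denotes ordered concatenation and $x^\alpha$ the concatenation of $\alpha$ copies of $x$. A prefix of $x$ is $x[0,\gamma)$, a suffix is $x[\gamma,|x|)$, proper if $0<\gamma<|x|$. Write $x<_{str}x'$ if there are letters $a<_Ab$ and words $y,z,z'$ with $x=yaz$, $x'=ybz'$; $x\le_{lex}x'$ iff $x$ is a prefix of $x'$ or $x<_{str}x'$. A word is primitive if $x=y^\alpha$ implies $\alpha=1$ and $y=x$; $w$ is prime if it is primitive and every proper suffix $z$ satisfies $w\le_{lex}z$. A sequence $(u_\beta)_{\beta<\alpha}$ of words is densely non-increasing if for all $\gamma<\gamma'\le\alpha$, either $u_\beta=u_\gamma$ for all $\gamma\le\beta<\gamma'$, or there exist $\gamma\le\beta<\beta'<\gamma'$ with $u_\beta>_{lex}u_{\beta'}$. *)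

theory Defs
  imports Main "HOL-Library.Countable_Set"
begin

text \<open>A word is represented by a well-order \<open>r\<close> on a
(countable) set of positions \<open>Field r\<close> together with a labelling of the
positions by letters. Words are identified up to label-preserving order
isomorphism (relation \<open>word_eq\<close>); a countable ordinal is represented by a
countable well-order.\<close>

type_synonym ('p, 'a) word = "'p rel \<times> ('p \<Rightarrow> 'a)"

definition wf_word :: "('p, 'a) word \<Rightarrow> bool" where
  "wf_word x \<longleftrightarrow> Well_order (fst x) \<and> countable (Field (fst x))"

definition word_eq :: "('p, 'a) word \<Rightarrow> ('q, 'a) word \<Rightarrow> bool" where
  "word_eq x y \<longleftrightarrow> (\<exists>f. bij_betw f (Field (fst x)) (Field (fst y))
     \<and> (\<forall>p\<in>Field (fst x). \<forall>q\<in>Field (fst x). (p, q) \<in> fst x \<longleftrightarrow> (f p, f q) \<in> fst y)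
     \<and> (\<forall>p\<in>Field (fst x). snd y (f p) = snd x p))"

definition restrict_word :: "('p, 'a) word \<Rightarrow> 'p set \<Rightarrow> ('p, 'a) word" where
  "restrict_word x S = (Restr (fst x) S, snd x)"

text \<open>Initial segments of the positions: these are exactly the position sets
of prefixes \<open>x[0,\<gamma>)\<close>, \<open>0 \<le> \<gamma> \<le> |x|\<close>.\<close>
definition init_seg :: "('p, 'a) word \<Rightarrow> 'p set \<Rightarrow> bool" where
  "init_seg x S \<longleftrightarrow> S \<subseteq> Field (fst x) \<and>
     (\<forall>p\<in>S. \<forall>q. (q, p) \<in> fst x \<longrightarrow> q \<in> S)"

definition below :: "('p, 'a) word \<Rightarrow> 'p \<Rightarrow> 'p set" where
  "below x p = {q. (q, p) \<in> fst x \<and> q \<noteq> p}"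

definition is_prefix :: "('p, 'a) word \<Rightarrow> ('q, 'a) word \<Rightarrow> bool" where
  "is_prefix x x' \<longleftrightarrow> (\<exists>S. init_seg x' S \<and> word_eq x (restrict_word x' S))"

text \<open>\<open>x <_str x'\<close>: \<open>x = y a z\<close>, \<open>x' = y b z'\<close> with \<open>a < b\<close>; here \<open>a\<close> sits at
position \<open>p\<close> of \<open>x\<close>, \<open>b\<close> at position \<open>p'\<close> of \<open>x'\<close>, and \<open>y\<close> is the common
prefix before them.\<close>
definition str_less :: "('p, 'a::linorder) word \<Rightarrow> ('q, 'a) word \<Rightarrow> bool" where
  "str_less x x' \<longleftrightarrow> (\<exists>p\<in>Field (fst x). \<exists>p'\<in>Field (fst x').
     word_eq (restrict_word x (below x p)) (restrict_word x' (below x' p'))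
     \<and> snd x p < snd x' p')"

definition lex_le :: "('p, 'a::linorder) word \<Rightarrow> ('q, 'a) word \<Rightarrow> bool" where
  "lex_le x x' \<longleftrightarrow> is_prefix x x' \<or> str_less x x'"

definition lex_less :: "('p, 'a::linorder) word \<Rightarrow> ('q, 'a) word \<Rightarrow> bool" where
  "lex_less x x' \<longleftrightarrow> lex_le x x' \<and> \<not> word_eq x x'"

text \<open>Ordered concatenation \<open>\<Prod>_{\<beta><\<alpha>} u_\<beta>\<close>, the index ordinal \<open>\<alpha>\<close> being
given by a well-order \<open>A\<close>.\<close>
definition word_prod :: "'i rel \<Rightarrow> ('i \<Rightarrow> ('p, 'a) word) \<Rightarrow> ('i \<times> 'p, 'a) word" where
  "word_prod A u =
     ({((i, p), (j, q)). i \<in> Field A \<and> j \<in> Field A \<and> p \<in> Field (fst (u i)) \<and> q \<in> Field (fst (u j))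
        \<and> ((i \<noteq> j \<and> (i, j) \<in> A) \<or> (i = j \<and> (p, q) \<in> fst (u i)))},
      \<lambda>(i, p). snd (u i) p)"

definition word_pow :: "('p, 'a) word \<Rightarrow> 'i rel \<Rightarrow> ('i \<times> 'p, 'a) word" where
  "word_pow y A = word_prod A (\<lambda>_. y)"

text \<open>All countable words and
countable ordinals are represented (up to isomorphism) on positions in \<open>nat\<close>.\<close>
definition primitive :: "('p, 'a) word \<Rightarrow> bool" where
  "primitive x \<longleftrightarrow> (\<forall>(A :: nat rel) (y :: (nat, 'a) word).
     Well_order A \<and> wf_word y \<and> word_eq x (word_pow y A) \<longrightarrow>
       (\<exists>i. Field A = {i}) \<and> word_eq y x)"

definition prime_word :: "('p, 'a::linorder) word \<Rightarrow> bool" where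
  "prime_word w \<longleftrightarrow> primitive w \<and>
     (\<forall>S. init_seg w S \<and> S \<noteq> {} \<and> S \<noteq> Field (fst w) \<longrightarrow>
        lex_le w (restrict_word w (Field (fst w) - S)))"

text \<open>Interval \<open>[\<gamma>, \<gamma>')\<close> of the index order \<open>A\<close>; \<open>None\<close> stands for \<open>\<gamma>' = \<alpha>\<close>.\<close>
definition ivl :: "'i rel \<Rightarrow> 'i \<Rightarrow> 'i option \<Rightarrow> 'i set" where
  "ivl A g g' = {b \<in> Field A. (g, b) \<in> A \<and>
      (case g' of None \<Rightarrow> True | Some e \<Rightarrow> (b, e) \<in> A \<and> b \<noteq> e)}"

definition dense_nonincr :: "'i rel \<Rightarrow> ('i \<Rightarrow> ('p, 'a::linorder) word) \<Rightarrow> bool" where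
  "dense_nonincr A u \<longleftrightarrow>
    (\<forall>g\<in>Field A. \<forall>g'. (case g' of None \<Rightarrow> True
                         | Some e \<Rightarrow> e \<in> Field A \<and> (g, e) \<in> A \<and> g \<noteq> e) \<longrightarrow>
       (\<forall>b\<in>ivl A g g'. word_eq (u b) (u g)) \<or>
       (\<exists>b\<in>ivl A g g'. \<exists>b'\<in>ivl A g g'. (b, b') \<in> A \<and> b \<noteq> b' \<and> lex_less (u b') (u b)))"

end

theory Submission
  imports Defs
begin

text \<open>
  Write \<open>w\<close> for the product and \<open>B0\<close> for the positions of its first factor \<open>u\<^sub>0\<close>; \<open>B0\<close> is a
  prime prefix of \<open>w\<close>. Prefixes are linearly ordered, so it suffices to show \<open>S = B0\<close> for
  every prime prefix \<open>S \<supseteq> B0\<close>.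
  A suffix of \<open>S\<close> starting at a block boundary is \<open>\<ge>\<^sub>l\<^sub>e\<^sub>x S\<close>, so no part of a block of \<open>S\<close> is
  strictly smaller than \<open>u\<^sub>0\<close>; a minimal counterexample together with density shows that
  each block of \<open>S\<close> (possibly cut) is a prefix of \<open>u\<^sub>0\<close>. If \<open>S\<close> has a last block beyond
  \<open>u\<^sub>0\<close>, that block is a suffix of \<open>S\<close> which is \<open>\<ge>\<^sub>l\<^sub>e\<^sub>x S\<close> but isomorphic to a proper prefix
  of \<open>S\<close>: impossible.
  Otherwise all blocks of \<open>S\<close> are complete. Take the shortest prefix \<open>L\<close> of \<open>u\<^sub>0\<close> isomorphic
  to a block; by density all blocks from the first such one on are isomorphic to \<open>L\<close>. If
  \<open>L = u\<^sub>0\<close>, then \<open>S\<close> is a power of \<open>u\<^sub>0\<close>, contradicting primitivity. Otherwise the suffix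
  \<open>T\<close> of \<open>S\<close> from that block on satisfies \<open>u\<^sub>0 \<le>\<^sub>l\<^sub>e\<^sub>x T\<close>. A strict difference would make a
  suffix of \<open>S\<close> smaller than \<open>S\<close>. If \<open>u\<^sub>0\<close> is a prefix of \<open>T\<close>, that prefix of \<open>T\<close> consists of at
  least two complete blocks isomorphic to \<open>L\<close> (not primitive), or it ends inside a block, so
  that a proper suffix of \<open>u\<^sub>0\<close> is a proper prefix of \<open>L\<close>, contradicting the primality of
  \<open>u\<^sub>0\<close>.
\<close>

section \<open>Well-orders\<close>

lemma well_order_refl: "Well_order r \<Longrightarrow> a \<in> Field r \<Longrightarrow> (a,a) \<in> r"
  unfolding well_order_on_def linear_order_on_def partial_order_on_def preorder_on_def refl_on_def
  by blast

lemma well_order_trans: "Well_order r \<Longrightarrow> (a,b) \<in> r \<Longrightarrow> (b,c) \<in> r \<Longrightarrow> (a,c) \<in> r"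
  unfolding well_order_on_def linear_order_on_def partial_order_on_def preorder_on_def trans_def
  by blast

lemma well_order_antisym: "Well_order r \<Longrightarrow> (a,b) \<in> r \<Longrightarrow> (b,a) \<in> r \<Longrightarrow> a = b"
  unfolding well_order_on_def linear_order_on_def partial_order_on_def antisym_def
  by blast

lemma well_order_total: "Well_order r \<Longrightarrow> a \<in> Field r \<Longrightarrow> b \<in> Field r \<Longrightarrow> (a,b) \<in> r \<or> (b,a) \<in> r"
  unfolding well_order_on_def linear_order_on_def total_on_def
  by (metis refl_onD partial_order_on_def preorder_on_def)

lemma well_order_least:
  assumes "Well_order r" "Q \<subseteq> Field r" "q \<in> Q"
  shows "\<exists>m\<in>Q. \<forall>q\<in>Q. (m,q) \<in> r"
  using assms Linear_order_Well_order_iff[of r] unfolding well_order_on_def by blast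

lemma well_order_mono_inflationary:
  assumes wo: "Well_order r" and S: "S \<subseteq> Field r" and fS: "f ` S \<subseteq> Field r"
    and inj: "inj_on f S"
    and mono: "\<And>p q. p \<in> S \<Longrightarrow> q \<in> S \<Longrightarrow> (p,q) \<in> r \<Longrightarrow> (f p, f q) \<in> r"
    and down: "\<And>p q. p \<in> S \<Longrightarrow> (q,p) \<in> r \<Longrightarrow> q \<in> S"
    and a: "a \<in> S"
  shows "(a, f a) \<in> r"
proof (rule ccontr)
  assume "(a, f a) \<notin> r"
  then obtain m where mS: "m \<in> S" and nm: "(m, f m) \<notin> r"
    and least: "\<forall>b\<in>S. (b, f b) \<notin> r \<longrightarrow> (m, b) \<in> r"
    using well_order_least[OF wo, of "{b\<in>S. (b, f b) \<notin> r}" a] a S by blast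
  have fm: "(f m, m) \<in> r" using well_order_total[OF wo, of m "f m"] mS S fS nm by auto
  have fmne: "f m \<noteq> m" using nm well_order_refl[OF wo, of m] mS S by auto
  have fmS: "f m \<in> S" using down[OF mS fm] .
  have "(f m, f (f m)) \<in> r"
    using least fmS fm fmne well_order_antisym[OF wo] by blast
  moreover have "(f (f m), f m) \<in> r" using mono[OF fmS mS fm] .
  ultimately have "f (f m) = f m" using well_order_antisym[OF wo] by blast
  then have "f m = m" using inj fmS mS by (auto dest: inj_onD)
  with fmne show False by simp
qed

lemma well_order_iso_downset_subset:
  assumes wo: "Well_order r" and S: "S \<subseteq> Field r" and S': "S' \<subseteq> Field r"
    and bij: "bij_betw f S S'"
    and mono: "\<And>p q. p \<in> S \<Longrightarrow> q \<in> S \<Longrightarrow> (p,q) \<in> r \<Longrightarrow> (f p, f q) \<in> r"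
    and down: "\<And>p q. p \<in> S \<Longrightarrow> (q,p) \<in> r \<Longrightarrow> q \<in> S"
    and down': "\<And>p q. p \<in> S' \<Longrightarrow> (q,p) \<in> r \<Longrightarrow> q \<in> S'"
  shows "S \<subseteq> S'"
proof
  fix a assume a: "a \<in> S"
  have "(a, f a) \<in> r"
    by (rule well_order_mono_inflationary[OF wo S _ _ mono down a])
       (use bij S' in \<open>auto simp: bij_betw_def\<close>)
  moreover have "f a \<in> S'" using bij a by (auto simp: bij_betw_def)
  ultimately show "a \<in> S'" using down' by blast
qed

section \<open>Isomorphisms of words\<close>

definition word_iso :: "('p, 'a) word \<Rightarrow> ('q, 'a) word \<Rightarrow> ('p \<Rightarrow> 'q) \<Rightarrow> bool" where
  "word_iso x y f \<longleftrightarrow> bij_betw f (Field (fst x)) (Field (fst y))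
     \<and> (\<forall>p\<in>Field (fst x). \<forall>q\<in>Field (fst x). (p, q) \<in> fst x \<longleftrightarrow> (f p, f q) \<in> fst y)
     \<and> (\<forall>p\<in>Field (fst x). snd y (f p) = snd x p)"

lemma word_eq_iff_word_iso: "word_eq x y \<longleftrightarrow> (\<exists>f. word_iso x y f)"
  by (simp add: word_eq_def word_iso_def)

lemma word_isoD:
  assumes "word_iso x y f"
  shows "bij_betw f (Field (fst x)) (Field (fst y))"
    "\<And>p q. p\<in>Field (fst x) \<Longrightarrow> q\<in>Field (fst x) \<Longrightarrow> (p, q) \<in> fst x \<longleftrightarrow> (f p, f q) \<in> fst y"
    "\<And>p. p\<in>Field (fst x) \<Longrightarrow> snd y (f p) = snd x p"
    "f ` Field (fst x) = Field (fst y)"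
    "inj_on f (Field (fst x))"
    "\<And>p. p\<in>Field (fst x) \<Longrightarrow> f p \<in> Field (fst y)"
  using assms unfolding word_iso_def bij_betw_def by auto

lemma word_iso_id: "word_iso x x id"
  by (simp add: word_iso_def)

lemma word_eq_refl: "word_eq x x"
  using word_iso_id word_eq_iff_word_iso by blast

lemma word_iso_inv:
  assumes "word_iso x y f"
  shows "word_iso y x (the_inv_into (Field (fst x)) f)"
proof -
  let ?g = "the_inv_into (Field (fst x)) f"
  have b: "bij_betw f (Field (fst x)) (Field (fst y))" using word_isoD[OF assms] by blast
  have bg: "bij_betw ?g (Field (fst y)) (Field (fst x))"
    using bij_betw_the_inv_into[OF b] .
  have fg: "\<And>q. q \<in> Field (fst y) \<Longrightarrow> f (?g q) = q"
    using b by (simp add: bij_betw_def f_the_inv_into_f)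
  have gin: "\<And>q. q \<in> Field (fst y) \<Longrightarrow> ?g q \<in> Field (fst x)"
    using bg by (auto simp: bij_betw_def)
  show ?thesis unfolding word_iso_def
  proof (intro conjI ballI)
    show "bij_betw ?g (Field (fst y)) (Field (fst x))" by fact
  next
    fix p q assume "p \<in> Field (fst y)" "q \<in> Field (fst y)"
    then show "(p, q) \<in> fst y \<longleftrightarrow> (?g p, ?g q) \<in> fst x"
      using word_isoD(2)[OF assms, of "?g p" "?g q"] fg gin by auto
  next
    fix p assume "p \<in> Field (fst y)"
    then show "snd x (?g p) = snd y p"
      using word_isoD(3)[OF assms, of "?g p"] fg gin by auto
  qed
qed

lemma word_eq_sym: "word_eq x y \<Longrightarrow> word_eq y x"
  unfolding word_eq_iff_word_iso using word_iso_inv by blast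

lemma word_iso_comp:
  assumes "word_iso x y f" "word_iso y z g"
  shows "word_iso x z (g \<circ> f)"
  unfolding word_iso_def
proof (intro conjI ballI)
  show "bij_betw (g \<circ> f) (Field (fst x)) (Field (fst z))"
    using word_isoD(1)[OF assms(1)] word_isoD(1)[OF assms(2)] bij_betw_trans by blast
next
  fix p q assume "p \<in> Field (fst x)" "q \<in> Field (fst x)"
  then show "(p, q) \<in> fst x \<longleftrightarrow> ((g \<circ> f) p, (g \<circ> f) q) \<in> fst z"
    using word_isoD(2,6)[OF assms(1)] word_isoD(2)[OF assms(2)] by auto
next
  fix p assume "p \<in> Field (fst x)"
  then show "snd z ((g \<circ> f) p) = snd x p"
    using word_isoD(3,6)[OF assms(1)] word_isoD(3)[OF assms(2)] by auto
qed

lemma word_eq_trans: "word_eq x y \<Longrightarrow> word_eq y z \<Longrightarrow> word_eq x z"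
  unfolding word_eq_iff_word_iso using word_iso_comp by blast

section \<open>Initial segments and prefixes\<close>

lemma fst_restrict_word[simp]: "fst (restrict_word x S) = Restr (fst x) S"
  by (simp add: restrict_word_def)
lemma snd_restrict_word[simp]: "snd (restrict_word x S) = snd x"
  by (simp add: restrict_word_def)

lemma restrict_word_restrict_word[simp]: "restrict_word (restrict_word x S) T = restrict_word x (S \<inter> T)"
  by (auto simp: restrict_word_def)

lemma restrict_word_Field: "restrict_word x (Field (fst x)) = x"
proof -
  have "Restr (fst x) (Field (fst x)) = fst x" by (auto simp: Field_def)
  then show ?thesis by (simp add: restrict_word_def)
qed

lemma Field_Restr_Well_order[simp]: "Well_order r \<Longrightarrow> Field (Restr r S) = S \<inter> Field r"
  using well_order_refl[of r] by (auto simp: Field_def)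

lemma Field_restrict_word[simp]: "Well_order (fst x) \<Longrightarrow> Field (fst (restrict_word x S)) = S \<inter> Field (fst x)"
  by (simp add: Field_Restr_Well_order)

lemma Well_order_restrict_word[simp]: "Well_order (fst x) \<Longrightarrow> Well_order (fst (restrict_word x S))"
  unfolding fst_restrict_word by (rule Well_order_Restr)

lemma word_iso_restrict_word:
  assumes "word_iso x y f" "Well_order (fst x)" "Well_order (fst y)"
  shows "word_iso (restrict_word x S) (restrict_word y (f ` (S \<inter> Field (fst x)))) f"
  unfolding word_iso_def
proof (intro conjI ballI)
  have b: "bij_betw f (Field (fst x)) (Field (fst y))" using word_isoD[OF assms(1)] by blast
  have "f ` (S \<inter> Field (fst x)) \<subseteq> Field (fst y)" using b by (auto simp: bij_betw_def)
  then have e: "f ` (S \<inter> Field (fst x)) \<inter> Field (fst y) = f ` (S \<inter> Field (fst x))" by blast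
  show "bij_betw f (Field (fst (restrict_word x S))) (Field (fst (restrict_word y (f ` (S \<inter> Field (fst x))))))"
    using assms(2,3) e bij_betw_subset[OF b, of "S \<inter> Field (fst x)"] by (simp add: Int_commute)
next
  fix p q assume pq: "p \<in> Field (fst (restrict_word x S))" "q \<in> Field (fst (restrict_word x S))"
  then have "p \<in> S \<inter> Field (fst x)" "q \<in> S \<inter> Field (fst x)" using assms(2) by auto
  then show "(p, q) \<in> fst (restrict_word x S) \<longleftrightarrow> (f p, f q) \<in> fst (restrict_word y (f ` (S \<inter> Field (fst x))))"
    using word_isoD(2)[OF assms(1), of p q] by auto
next
  fix p assume "p \<in> Field (fst (restrict_word x S))"
  then show "snd (restrict_word y (f ` (S \<inter> Field (fst x)))) (f p) = snd (restrict_word x S) p"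
    using assms(2) word_isoD(3)[OF assms(1)] by auto
qed

lemma below_restrict_word: "p \<in> S \<Longrightarrow> below (restrict_word x S) p = below x p \<inter> S"
  by (auto simp: below_def)

lemma below_subset_Field: "below x p \<subseteq> Field (fst x)"
  by (auto simp: below_def Field_def)

lemma init_seg_below: "Well_order (fst x) \<Longrightarrow> init_seg x (below x p)"
  unfolding init_seg_def below_def
  using well_order_trans[of "fst x"] well_order_antisym[of "fst x"] by (auto simp: Field_def)

lemma below_inj: "Well_order (fst x) \<Longrightarrow> p \<in> Field (fst x) \<Longrightarrow> q \<in> Field (fst x) \<Longrightarrow> below x p = below x q \<Longrightarrow> p = q"
  unfolding below_def using well_order_total[of "fst x" p q] by blast

lemma init_seg_Field: "init_seg x (Field (fst x))"
  by (auto simp: init_seg_def Field_def)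

lemma init_seg_subset_below: "Well_order (fst x) \<Longrightarrow> init_seg x S \<Longrightarrow> p \<in> Field (fst x) \<Longrightarrow> p \<notin> S \<Longrightarrow> S \<subseteq> below x p"
  unfolding init_seg_def below_def using well_order_total[of "fst x"] by blast

lemma init_seg_linear:
  "Well_order (fst x) \<Longrightarrow> init_seg x S \<Longrightarrow> init_seg x T \<Longrightarrow> S \<subseteq> T \<or> T \<subseteq> S"
  unfolding init_seg_def using well_order_total[of "fst x"] by blast

lemma init_seg_restrict_word_iff:
  assumes "Well_order (fst x)" "init_seg x S"
  shows "init_seg (restrict_word x S) T \<longleftrightarrow> T \<subseteq> S \<and> init_seg x T"
  using assms unfolding init_seg_def by (auto simp: Field_Restr_Well_order)

lemma init_seg_restrict_word_Int:
  assumes "Well_order (fst x)" "init_seg x Y"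
  shows "init_seg (restrict_word x T) (T \<inter> Y)"
  using assms unfolding init_seg_def by auto

lemma init_seg_restrict_word_mono:
  assumes "Well_order (fst x)" "init_seg (restrict_word x T) S" "S \<subseteq> Z" "Z \<subseteq> T"
  shows "init_seg (restrict_word x Z) S"
  using assms unfolding init_seg_def by (auto 0 4)

lemma init_seg_restrict_wordD:
  assumes "Well_order (fst x)" "init_seg (restrict_word x T) S" "p \<in> S" "(q, p) \<in> fst x" "q \<in> T"
  shows "q \<in> S"
  using assms unfolding init_seg_def by auto

lemma init_seg_word_iso_subset:
  assumes wo: "Well_order (fst x)" and S: "init_seg x S" and S': "init_seg x S'"
    and f: "word_iso (restrict_word x S) (restrict_word x S') f"
  shows "S \<subseteq> S'"
proof -
  have SF: "S \<subseteq> Field (fst x)" and S'F: "S' \<subseteq> Field (fst x)" using S S' by (auto simp: init_seg_def)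
  have FS: "Field (fst (restrict_word x S)) = S" and FS': "Field (fst (restrict_word x S')) = S'"
    using SF S'F wo by auto
  show ?thesis
  proof (rule well_order_iso_downset_subset[OF wo SF S'F])
    show "bij_betw f S S'" using word_isoD(1)[OF f] FS FS' by simp
    show "\<And>p q. p \<in> S \<Longrightarrow> q \<in> S \<Longrightarrow> (p,q) \<in> fst x \<Longrightarrow> (f p, f q) \<in> fst x"
      using word_isoD(2)[OF f] FS by auto
    show "\<And>p q. p \<in> S \<Longrightarrow> (q,p) \<in> fst x \<Longrightarrow> q \<in> S" using S by (auto simp: init_seg_def)
    show "\<And>p q. p \<in> S' \<Longrightarrow> (q,p) \<in> fst x \<Longrightarrow> q \<in> S'" using S' by (auto simp: init_seg_def)
  qed
qed

lemma init_seg_eq_if_word_eq: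
  assumes wo: "Well_order (fst x)" and S: "init_seg x S" and S': "init_seg x S'"
    and e: "word_eq (restrict_word x S) (restrict_word x S')"
  shows "S = S'"
  using init_seg_word_iso_subset[OF wo S S'] init_seg_word_iso_subset[OF wo S' S] e word_eq_sym[OF e]
  unfolding word_eq_iff_word_iso by blast

lemma word_iso_init_seg:
  assumes f: "word_iso y z f" and wy: "Well_order (fst y)" and wz: "Well_order (fst z)"
    and S: "init_seg y S"
  shows "init_seg z (f ` S)"
  unfolding init_seg_def
proof (intro conjI ballI allI impI)
  have SF: "S \<subseteq> Field (fst y)" using S by (auto simp: init_seg_def)
  then show "f ` S \<subseteq> Field (fst z)" using word_isoD(6)[OF f] by auto
next
  fix p' q' assume p': "p' \<in> f ` S" and qp: "(q', p') \<in> fst z"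
  obtain p where p: "p \<in> S" "p' = f p" using p' by auto
  have pF: "p \<in> Field (fst y)" using p S by (auto simp: init_seg_def)
  have "q' \<in> Field (fst z)" using qp by (auto simp: Field_def)
  then obtain q where q: "q \<in> Field (fst y)" "q' = f q" using word_isoD(4)[OF f] by auto
  have "(q, p) \<in> fst y" using word_isoD(2)[OF f q(1) pF] qp p q by simp
  then have "q \<in> S" using S p by (auto simp: init_seg_def)
  then show "q' \<in> f ` S" using q by auto
qed

lemma word_iso_image_below:
  assumes f: "word_iso y z f" and wy: "Well_order (fst y)" and wz: "Well_order (fst z)"
    and p: "p \<in> Field (fst y)"
  shows "f ` below y p = below z (f p)"
proof
  show "f ` below y p \<subseteq> below z (f p)"
  proof
    fix v assume "v \<in> f ` below y p"
    then obtain q where q: "q \<in> below y p" "v = f q" by auto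
    have qF: "q \<in> Field (fst y)" using q below_subset_Field[of y p] by blast
    have "(f q, f p) \<in> fst z" using q word_isoD(2)[OF f qF p] by (auto simp: below_def)
    moreover have "f q \<noteq> f p" using q word_isoD(5)[OF f] qF p by (auto simp: below_def dest: inj_onD)
    ultimately show "v \<in> below z (f p)" using q by (auto simp: below_def)
  qed
next
  show "below z (f p) \<subseteq> f ` below y p"
  proof
    fix v assume v: "v \<in> below z (f p)"
    then have "v \<in> Field (fst z)" using below_subset_Field[of z "f p"] by blast
    then obtain q where q: "q \<in> Field (fst y)" "v = f q" using word_isoD(4)[OF f] by auto
    have "(q, p) \<in> fst y" using v q word_isoD(2)[OF f q(1) p] by (auto simp: below_def)
    moreover have "q \<noteq> p" using v q by (auto simp: below_def)
    ultimately show "v \<in> f ` below y p" using q by (auto simp: below_def)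
  qed
qed

lemma word_iso_restrict_below:
  assumes f: "word_iso y z f" and wy: "Well_order (fst y)" and wz: "Well_order (fst z)"
    and p: "p \<in> Field (fst y)"
  shows "word_iso (restrict_word y (below y p)) (restrict_word z (below z (f p))) f"
proof -
  have "below y p \<inter> Field (fst y) = below y p" using below_subset_Field[of y p] by blast
  then show ?thesis using word_iso_restrict_word[OF f wy wz, of "below y p"] word_iso_image_below[OF f wy wz p] by simp
qed

lemma Inter_init_seg_mem:
  assumes wo: "Well_order (fst x)" and LL: "\<forall>L\<in>LL. init_seg x L" "L1 \<in> LL"
  shows "\<Inter>LL \<in> LL"
proof (cases "L1 \<subseteq> \<Inter>LL")
  case True
  then have "\<Inter>LL = L1" using LL(2) by blast
  then show ?thesis using LL(2) by simp
next
  case False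
  have sub: "L1 - \<Inter>LL \<subseteq> Field (fst x)" using LL unfolding init_seg_def by blast
  obtain c0 where "c0 \<in> L1 - \<Inter>LL" using False by blast
  then obtain c where c: "c \<in> L1 - \<Inter>LL" "\<forall>e\<in>L1 - \<Inter>LL. (c,e) \<in> fst x"
    using well_order_least[OF wo sub] by blast
  obtain L0 where L0: "L0 \<in> LL" "c \<notin> L0" using c(1) by blast
  have "L0 \<subseteq> below x c"
    using init_seg_subset_below[OF wo _ _ L0(2)] LL L0(1) c(1) sub by blast
  moreover have "below x c \<subseteq> \<Inter>LL"
    using c LL(1,2) well_order_antisym[OF wo] unfolding below_def init_seg_def by blast
  ultimately have "\<Inter>LL = L0" using L0(1) by blast
  then show ?thesis using L0(1) by simp
qed

lemma word_iso_preimage_init_seg: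
  assumes h: "word_iso x y h" and wx: "Well_order (fst x)" and wy: "Well_order (fst y)"
    and Y: "init_seg y Y"
  defines "X \<equiv> {z \<in> Field (fst x). h z \<in> Y}"
  shows "init_seg x X" "h ` X = Y"
    "word_iso (restrict_word x (Field (fst x) - X)) (restrict_word y (Field (fst y) - Y)) h"
proof -
  show "init_seg x X"
    unfolding init_seg_def X_def
  proof (intro conjI ballI allI impI)
    fix z v assume z: "z \<in> {z \<in> Field (fst x). h z \<in> Y}" and vz: "(v, z) \<in> fst x"
    then have v: "v \<in> Field (fst x)" by (auto simp: Field_def)
    then have "(h v, h z) \<in> fst y" using word_isoD(2)[OF h] z vz by blast
    then show "v \<in> {z \<in> Field (fst x). h z \<in> Y}" using Y z v unfolding init_seg_def by blast
  qed blast
  have "Y \<subseteq> Field (fst y)" using Y by (simp add: init_seg_def)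
  then show hX: "h ` X = Y" unfolding X_def using word_isoD(4)[OF h] by auto
  have "h ` ((Field (fst x) - X) \<inter> Field (fst x)) = Field (fst y) - Y"
    using word_isoD(4,5)[OF h] hX inj_on_image_set_diff[of h "Field (fst x)" "Field (fst x)" X]
    unfolding X_def by auto
  then show "word_iso (restrict_word x (Field (fst x) - X)) (restrict_word y (Field (fst y) - Y)) h"
    using word_iso_restrict_word[OF h wx wy, of "Field (fst x) - X"] by simp
qed

lemma is_prefix_restrict_word: "init_seg x S \<Longrightarrow> is_prefix (restrict_word x S) x"
  unfolding is_prefix_def using word_eq_refl by blast

lemma is_prefix_restrict_word_init_seg:
  assumes "init_seg (restrict_word x T) X" "X \<subseteq> T"
  shows "is_prefix (restrict_word x X) (restrict_word x T)"
  using is_prefix_restrict_word[OF assms(1)] assms(2) by (simp add: Int_absorb1)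

lemma is_prefix_refl: "is_prefix x x"
  using is_prefix_restrict_word[OF init_seg_Field] restrict_word_Field by metis

lemma is_prefix_word_eq_left: "word_eq x' x \<Longrightarrow> is_prefix x y \<Longrightarrow> is_prefix x' y"
  unfolding is_prefix_def using word_eq_trans by blast

lemma is_prefix_word_eq_right:
  assumes e: "word_eq y y'" and p: "is_prefix x y" and wy: "Well_order (fst y)" and wy': "Well_order (fst y')"
  shows "is_prefix x y'"
proof -
  obtain f where f: "word_iso y y' f" using e word_eq_iff_word_iso by blast
  obtain S where S: "init_seg y S" "word_eq x (restrict_word y S)" using p is_prefix_def by blast
  have "S \<inter> Field (fst y) = S" using S by (auto simp: init_seg_def)
  then have "word_iso (restrict_word y S) (restrict_word y' (f ` S)) f" using word_iso_restrict_word[OF f wy wy', of S] by simp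
  then have "word_eq x (restrict_word y' (f ` S))" using S word_eq_trans word_eq_iff_word_iso by blast
  moreover have "init_seg y' (f ` S)" using word_iso_init_seg[OF f wy wy' S(1)] .
  ultimately show ?thesis unfolding is_prefix_def by blast
qed

lemma init_seg_restrict_word_trans:
  assumes "Well_order (fst z)" "init_seg z T" "init_seg (restrict_word z T) S"
  shows "init_seg z S" "S \<subseteq> T"
  using init_seg_restrict_word_iff[OF assms(1,2)] assms(3) by auto

lemma is_prefix_trans:
  assumes p1: "is_prefix x y" and p2: "is_prefix y z" and wy: "Well_order (fst y)" and wz: "Well_order (fst z)"
  shows "is_prefix x z"
proof -
  obtain T where T: "init_seg z T" "word_eq y (restrict_word z T)" using p2 is_prefix_def by blast
  have "is_prefix x (restrict_word z T)" using is_prefix_word_eq_right[OF T(2) p1 wy Well_order_restrict_word[OF wz]] .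
  then obtain S where S: "init_seg (restrict_word z T) S" "word_eq x (restrict_word (restrict_word z T) S)"
    using is_prefix_def by blast
  have "init_seg z S" "S \<subseteq> T" using init_seg_restrict_word_trans[OF wz T(1) S(1)] by auto
  moreover have "restrict_word (restrict_word z T) S = restrict_word z S" using \<open>S \<subseteq> T\<close>
    by (simp add: Int_absorb1)
  ultimately show ?thesis using S(2) unfolding is_prefix_def by auto
qed

lemma is_prefix_init_seg_subset:
  assumes wo: "Well_order (fst x)" and S: "init_seg x S" and S': "init_seg x S'"
    and p: "is_prefix (restrict_word x S) (restrict_word x S')"
  shows "S \<subseteq> S'"
proof -
  obtain T where T: "init_seg (restrict_word x S') T" "word_eq (restrict_word x S) (restrict_word (restrict_word x S') T)"
    using p is_prefix_def by blast
  have "init_seg x T" "T \<subseteq> S'" using init_seg_restrict_word_trans[OF wo S' T(1)] by auto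
  moreover have "restrict_word (restrict_word x S') T = restrict_word x T" using \<open>T \<subseteq> S'\<close>
    by (simp add: Int_absorb1)
  ultimately show ?thesis using init_seg_eq_if_word_eq[OF wo S, of T] T(2) by auto
qed

lemma is_prefix_restrict_word_subset:
  assumes "init_seg x S" "init_seg x T" "S \<subseteq> T" "Well_order (fst x)"
  shows "is_prefix (restrict_word x S) (restrict_word x T)"
proof -
  have "init_seg (restrict_word x T) S" using init_seg_restrict_word_iff[OF assms(4,2)] assms by auto
  moreover have "restrict_word (restrict_word x T) S = restrict_word x S" using assms(3) by (simp add: Int_absorb1)
  ultimately show ?thesis using is_prefix_restrict_word by metis
qed

section \<open>Lexicographic comparison\<close>

lemma str_lessE:
  assumes "str_less x y"
  obtains p p' where "p \<in> Field (fst x)" "p' \<in> Field (fst y)"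
    "word_eq (restrict_word x (below x p)) (restrict_word y (below y p'))" "snd x p < snd y p'"
  using assms unfolding str_less_def by blast

lemma str_lessI:
  "p \<in> Field (fst x) \<Longrightarrow> p' \<in> Field (fst y) \<Longrightarrow>
    word_eq (restrict_word x (below x p)) (restrict_word y (below y p')) \<Longrightarrow> snd x p < snd y p' \<Longrightarrow> str_less x y"
  unfolding str_less_def by blast

definition str_less_at :: "('p, 'a::linorder) word \<Rightarrow> ('q, 'a) word \<Rightarrow> 'p \<Rightarrow> 'q \<Rightarrow> bool" where
  "str_less_at x x' p p' \<longleftrightarrow> p \<in> Field (fst x) \<and> p' \<in> Field (fst x') \<and>
     word_eq (restrict_word x (below x p)) (restrict_word x' (below x' p')) \<and> snd x p < snd x' p'"

lemma str_less_iff_str_less_at: "str_less x x' \<longleftrightarrow> (\<exists>p p'. str_less_at x x' p p')"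
  by (auto simp: str_less_def str_less_at_def)

lemma str_less_word_iso_right:
  assumes s: "str_less x y" and f: "word_iso y z f" and wy: "Well_order (fst y)" and wz: "Well_order (fst z)"
  shows "str_less x z"
proof -
  obtain p p' where pp: "p \<in> Field (fst x)" "p' \<in> Field (fst y)"
    "word_eq (restrict_word x (below x p)) (restrict_word y (below y p'))" "snd x p < snd y p'"
    using str_lessE[OF s] by blast
  have "word_eq (restrict_word y (below y p')) (restrict_word z (below z (f p')))"
    using word_iso_restrict_below[OF f wy wz pp(2)] word_eq_iff_word_iso by blast
  then have "word_eq (restrict_word x (below x p)) (restrict_word z (below z (f p')))"
    using word_eq_trans[OF pp(3)] by blast
  moreover have "snd z (f p') = snd y p'" using word_isoD(3)[OF f pp(2)] .
  ultimately show ?thesis using pp word_isoD(6)[OF f pp(2)] by (intro str_lessI[of p _ "f p'"]) auto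
qed

lemma str_less_word_iso_left:
  assumes s: "str_less x y" and f: "word_iso x z f" and wx: "Well_order (fst x)" and wz: "Well_order (fst z)"
  shows "str_less z y"
proof -
  obtain p p' where pp: "p \<in> Field (fst x)" "p' \<in> Field (fst y)"
    "word_eq (restrict_word x (below x p)) (restrict_word y (below y p'))" "snd x p < snd y p'"
    using str_lessE[OF s] by blast
  have "word_eq (restrict_word x (below x p)) (restrict_word z (below z (f p)))"
    using word_iso_restrict_below[OF f wx wz pp(1)] word_eq_iff_word_iso by blast
  then have "word_eq (restrict_word z (below z (f p))) (restrict_word y (below y p'))"
    using word_eq_trans[OF word_eq_sym pp(3)] by blast
  moreover have "snd z (f p) = snd x p" using word_isoD(3)[OF f pp(1)] .
  ultimately show ?thesis using pp word_isoD(6)[OF f pp(1)]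
    by (intro str_lessI[of "f p" _ p']) auto
qed

lemma str_less_word_eq_right: "str_less x y \<Longrightarrow> word_eq y z \<Longrightarrow> Well_order (fst y) \<Longrightarrow> Well_order (fst z) \<Longrightarrow> str_less x z"
  using str_less_word_iso_right word_eq_iff_word_iso by blast

lemma str_less_word_eq_left: "str_less x y \<Longrightarrow> word_eq x z \<Longrightarrow> Well_order (fst x) \<Longrightarrow> Well_order (fst z) \<Longrightarrow> str_less z y"
  using str_less_word_iso_left word_eq_iff_word_iso by blast

lemma restrict_word_below_init_seg:
  assumes "init_seg y T" "p \<in> T" "Well_order (fst y)"
  shows "restrict_word (restrict_word y T) (below (restrict_word y T) p) = restrict_word y (below y p)"
proof -
  have "below y p \<subseteq> T" using assms by (auto simp: below_def init_seg_def)
  then show ?thesis using assms by (simp add: below_restrict_word Int_absorb1 Int_absorb2)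
qed

lemma str_less_at_restrict_right:
  assumes at: "str_less_at x y c c'" and Z: "init_seg y Z" "c' \<in> Z" and wy: "Well_order (fst y)"
  shows "str_less x (restrict_word y Z)"
  using at restrict_word_below_init_seg[OF Z wy] Z(2) wy unfolding str_less_at_def
  by (intro str_lessI[of c _ c']) auto

lemma str_less_at_suffix:
  assumes wx: "Well_order (fst x)" and wy: "Well_order (fst y)"
    and at: "str_less_at x y c c'" and Y: "init_seg y Y" "c' \<notin> Y"
  obtains S0 where "init_seg x S0" "c \<notin> S0"
    "str_less_at (restrict_word x (Field (fst x) - S0)) (restrict_word y (Field (fst y) - Y)) c c'"
proof -
  let ?x = "restrict_word x (below x c)" and ?y = "restrict_word y (below y c')"
  obtain h where h: "word_iso ?x ?y h" using at unfolding str_less_at_def word_eq_iff_word_iso by blast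
  have Fx: "Field (fst ?x) = below x c" and Fy: "Field (fst ?y) = below y c'"
    using below_subset_Field[of x c] below_subset_Field[of y c'] wx wy by auto
  have "init_seg y (Y \<inter> below y c')"
    using Y(1) init_seg_below[OF wy, of c'] unfolding init_seg_def by blast
  then have Y': "init_seg ?y (Y \<inter> below y c')"
    using init_seg_restrict_word_iff[OF wy init_seg_below[OF wy]] by blast
  define S0 where "S0 = {z \<in> Field (fst ?x). h z \<in> Y \<inter> below y c'}"
  note pre = word_iso_preimage_init_seg[OF h Well_order_restrict_word[OF wx] Well_order_restrict_word[OF wy]
      Y', folded S0_def, unfolded Fx Fy]
  have S0: "init_seg x S0" "S0 \<subseteq> below x c"
    using pre(1) init_seg_restrict_word_iff[OF wx init_seg_below[OF wx]] wx by auto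
  have c: "c \<notin> S0" using S0(2) by (auto simp: below_def)
  have F: "c \<in> Field (fst x)" "c' \<in> Field (fst y)" using at by (auto simp: str_less_at_def)
  have "below x c \<inter> (below x c - S0) = below x c - S0"
    and "below y c' \<inter> (below y c' - Y \<inter> below y c') = below y c' - Y" by blast+
  then have "word_iso (restrict_word x (below x c - S0)) (restrict_word y (below y c' - Y)) h"
    using pre(3) by simp
  moreover have "restrict_word (restrict_word x (Field (fst x) - S0))
      (below (restrict_word x (Field (fst x) - S0)) c) = restrict_word x (below x c - S0)"
  proof -
    have "(Field (fst x) - S0) \<inter> (below x c \<inter> (Field (fst x) - S0)) = below x c - S0"
      using below_subset_Field[of x c] by blast
    then show ?thesis using F c by (simp add: below_restrict_word)
  qed
  moreover have "restrict_word (restrict_word y (Field (fst y) - Y))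
      (below (restrict_word y (Field (fst y) - Y)) c') = restrict_word y (below y c' - Y)"
  proof -
    have "(Field (fst y) - Y) \<inter> (below y c' \<inter> (Field (fst y) - Y)) = below y c' - Y"
      using below_subset_Field[of y c'] by blast
    then show ?thesis using F Y(2) by (simp add: below_restrict_word)
  qed
  ultimately have "str_less_at (restrict_word x (Field (fst x) - S0))
      (restrict_word y (Field (fst y) - Y)) c c'"
    using at F c Y(2) wx wy unfolding str_less_at_def word_eq_iff_word_iso by auto
  then show thesis using that S0(1) c by blast
qed

lemma str_less_restrict_right:
  assumes s: "str_less x (restrict_word y T)" and T: "init_seg y T" and wy: "Well_order (fst y)"
  shows "str_less x y"
proof -
  obtain p p' where pp: "p \<in> Field (fst x)" "p' \<in> Field (fst (restrict_word y T))"
    "word_eq (restrict_word x (below x p)) (restrict_word (restrict_word y T) (below (restrict_word y T) p'))"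
    "snd x p < snd (restrict_word y T) p'"
    using str_lessE[OF s] by blast
  have p'T: "p' \<in> T" "p' \<in> Field (fst y)" using pp(2) wy by auto
  show ?thesis using pp restrict_word_below_init_seg[OF T p'T(1) wy] p'T by (intro str_lessI[of p _ p']) auto
qed

lemma str_less_restrict_left:
  assumes s: "str_less (restrict_word y T) x" and T: "init_seg y T" and wy: "Well_order (fst y)"
  shows "str_less y x"
proof -
  obtain p p' where pp: "p \<in> Field (fst (restrict_word y T))" "p' \<in> Field (fst x)"
    "word_eq (restrict_word (restrict_word y T) (below (restrict_word y T) p)) (restrict_word x (below x p'))"
    "snd (restrict_word y T) p < snd x p'"
    using str_lessE[OF s] by blast
  have pT: "p \<in> T" "p \<in> Field (fst y)" using pp(1) wy by auto
  show ?thesis using pp restrict_word_below_init_seg[OF T pT(1) wy] pT by (intro str_lessI[of p _ p']) auto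
qed

lemma str_less_is_prefix_right:
  assumes "str_less x y" "is_prefix y y'" "Well_order (fst y)" "Well_order (fst y')"
  shows "str_less x y'"
proof -
  obtain T where T: "init_seg y' T" "word_eq y (restrict_word y' T)" using assms(2) is_prefix_def by blast
  have "str_less x (restrict_word y' T)" using str_less_word_eq_right[OF assms(1) T(2) assms(3) Well_order_restrict_word[OF assms(4)]] .
  then show ?thesis using str_less_restrict_right T(1) assms(4) by blast
qed

lemma str_less_is_prefix_left:
  assumes "str_less x y" "is_prefix x x'" "Well_order (fst x)" "Well_order (fst x')"
  shows "str_less x' y"
proof -
  obtain T where T: "init_seg x' T" "word_eq x (restrict_word x' T)" using assms(2) is_prefix_def by blast
  have "str_less (restrict_word x' T) y" using str_less_word_eq_left[OF assms(1) T(2) assms(3) Well_order_restrict_word[OF assms(4)]] .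
  then show ?thesis using str_less_restrict_left T(1) assms(4) by blast
qed

lemma word_eq_below_inj:
  assumes wy: "Well_order (fst y)" and "a \<in> Field (fst y)" "b \<in> Field (fst y)"
    and "word_eq (restrict_word y (below y a)) (restrict_word y (below y b))"
  shows "a = b"
  using below_inj[OF assms(1-3) init_seg_eq_if_word_eq[OF wy init_seg_below[OF wy] init_seg_below[OF wy]
      assms(4)]] .

lemma not_str_less_init_segs:
  assumes wo: "Well_order (fst x)" and L: "init_seg x L" and L': "init_seg x L'"
  shows "\<not> str_less (restrict_word x L) (restrict_word x L')"
proof
  assume "str_less (restrict_word x L) (restrict_word x L')"
  then obtain p p' where pp: "p \<in> Field (fst (restrict_word x L))" "p' \<in> Field (fst (restrict_word x L'))"
    "word_eq (restrict_word (restrict_word x L) (below (restrict_word x L) p)) (restrict_word (restrict_word x L') (below (restrict_word x L') p'))"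
    "snd (restrict_word x L) p < snd (restrict_word x L') p'"
    using str_lessE by blast
  have pL: "p \<in> L" "p \<in> Field (fst x)" "p' \<in> L'" "p' \<in> Field (fst x)" using pp wo by auto
  have "word_eq (restrict_word x (below x p)) (restrict_word x (below x p'))"
    using pp(3) restrict_word_below_init_seg[OF L pL(1) wo] restrict_word_below_init_seg[OF L' pL(3) wo] by simp
  then have "p = p'" using word_eq_below_inj[OF wo pL(2) pL(4)] by blast
  then show False using pp(4) by simp
qed

lemma is_prefix_not_str_less:
  assumes p: "is_prefix x y" and wx: "Well_order (fst x)" and wy: "Well_order (fst y)"
  shows "\<not> str_less x y" "\<not> str_less y x"
proof -
  obtain S where S: "init_seg y S" "word_eq x (restrict_word y S)" using p is_prefix_def by blast
  have y: "y = restrict_word y (Field (fst y))" using restrict_word_Field by metis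
  show "\<not> str_less x y"
  proof
    assume "str_less x y"
    then have "str_less (restrict_word y S) (restrict_word y (Field (fst y)))"
      using str_less_word_eq_left[OF _ S(2) wx Well_order_restrict_word[OF wy]] y by metis
    then show False using not_str_less_init_segs[OF wy S(1) init_seg_Field] by blast
  qed
  show "\<not> str_less y x"
  proof
    assume "str_less y x"
    then have "str_less (restrict_word y (Field (fst y))) (restrict_word y S)"
      using str_less_word_eq_right[OF _ S(2) wx Well_order_restrict_word[OF wy]] y by metis
    then show False using not_str_less_init_segs[OF wy init_seg_Field S(1)] by blast
  qed
qed

lemma word_iso_init_seg_pos:
  assumes k: "word_iso (restrict_word x S) (restrict_word y T) k" and wx: "Well_order (fst x)" and wy: "Well_order (fst y)"
    and S: "init_seg x S" and T: "init_seg y T" and c: "c \<in> S"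
  shows "word_eq (restrict_word x (below x c)) (restrict_word y (below y (k c)))"
    "k c \<in> T" "snd y (k c) = snd x c"
proof -
  have SF: "S \<subseteq> Field (fst x)" "T \<subseteq> Field (fst y)" using S T by (auto simp: init_seg_def)
  have cF: "c \<in> Field (fst (restrict_word x S))" using c SF wx by auto
  have kc: "k c \<in> Field (fst (restrict_word y T))" using word_isoD(6)[OF k cF] .
  then show kT: "k c \<in> T" using wy by auto
  have "word_iso (restrict_word (restrict_word x S) (below (restrict_word x S) c))
             (restrict_word (restrict_word y T) (below (restrict_word y T) (k c))) k"
    using word_iso_restrict_below[OF k Well_order_restrict_word[OF wx] Well_order_restrict_word[OF wy] cF] .
  then show "word_eq (restrict_word x (below x c)) (restrict_word y (below y (k c)))"
    using restrict_word_below_init_seg[OF S c wx] restrict_word_below_init_seg[OF T kT wy] word_eq_iff_word_iso by metis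
  show "snd y (k c) = snd x c" using word_isoD(3)[OF k cF] by simp
qed

lemma word_eq_below_snd_eq:
  assumes wx: "Well_order (fst x)" and wy: "Well_order (fst y)"
    and ab: "word_eq (restrict_word x (below x a)) (restrict_word y (below y b))"
    and c: "c \<in> below x a" and d: "d \<in> Field (fst y)"
    and cd: "word_eq (restrict_word x (below x c)) (restrict_word y (below y d))"
  shows "snd x c = snd y d"
proof -
  obtain k where k: "word_iso (restrict_word x (below x a)) (restrict_word y (below y b)) k"
    using ab word_eq_iff_word_iso by blast
  note kc = word_iso_init_seg_pos[OF k wx wy init_seg_below[OF wx] init_seg_below[OF wy] c]
  have "k c \<in> Field (fst y)" using kc(2) below_subset_Field[of y b] by blast
  then have "k c = d" using word_eq_below_inj[OF wy _ d word_eq_trans[OF word_eq_sym[OF kc(1)] cd]] by blast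
  then show ?thesis using kc(3) by simp
qed

lemma str_less_asym:
  assumes wx: "Well_order (fst x)" and wy: "Well_order (fst y)"
    and s1: "str_less x y" and s2: "str_less y x"
  shows False
proof -
  obtain p p' where pp: "p \<in> Field (fst x)" "p' \<in> Field (fst y)"
    "word_eq (restrict_word x (below x p)) (restrict_word y (below y p'))" "snd x p < snd y p'"
    using str_lessE[OF s1] by blast
  obtain q q' where qq: "q \<in> Field (fst y)" "q' \<in> Field (fst x)"
    "word_eq (restrict_word y (below y q)) (restrict_word x (below x q'))" "snd y q < snd x q'"
    using str_lessE[OF s2] by blast
  consider "p = q'" | "p \<in> below x q'" | "q' \<in> below x p"
    using well_order_total[OF wx pp(1) qq(2)] unfolding below_def by blast
  then show False
  proof cases
    case 1
    then have "q = p'" using word_eq_below_inj[OF wy qq(1) pp(2) word_eq_trans[OF qq(3)]] pp(3) by simp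
    then show False using pp(4) qq(4) 1 by simp
  next
    case 2
    then show False using word_eq_below_snd_eq[OF wx wy word_eq_sym[OF qq(3)] 2 pp(2,3)] pp(4) by simp
  next
    case 3
    then show False using word_eq_below_snd_eq[OF wx wy pp(3) 3 qq(1) word_eq_sym[OF qq(3)]] qq(4)
      by simp
  qed
qed

lemma is_prefix_str_less:
  assumes p: "is_prefix x y" and s: "str_less y z"
    and wx: "Well_order (fst x)" and wy: "Well_order (fst y)" and wz: "Well_order (fst z)"
  shows "is_prefix x z \<or> str_less x z"
proof -
  obtain S where S: "init_seg y S" "word_eq x (restrict_word y S)" using p is_prefix_def by blast
  obtain q q' where qq: "q \<in> Field (fst y)" "q' \<in> Field (fst z)"
    "word_eq (restrict_word y (below y q)) (restrict_word z (below z q'))" "snd y q < snd z q'"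
    using str_lessE[OF s] by blast
  show ?thesis
  proof (cases "q \<in> S")
    case True
    have "str_less (restrict_word y S) z"
      using qq True restrict_word_below_init_seg[OF S(1) True wy] wy by (intro str_lessI[of q _ q']) auto
    then have "str_less x z" using str_less_word_eq_left[OF _ word_eq_sym[OF S(2)] Well_order_restrict_word[OF wy] wx] by blast
    then show ?thesis by blast
  next
    case False
    have sub: "S \<subseteq> below y q" using init_seg_subset_below[OF wy S(1) qq(1) False] .
    have "is_prefix (restrict_word y S) (restrict_word y (below y q))"
      using is_prefix_restrict_word_subset[OF S(1) init_seg_below[OF wy] sub wy] .
    then have "is_prefix x (restrict_word y (below y q))" using is_prefix_word_eq_left[OF S(2)] by blast
    then have "is_prefix x (restrict_word z (below z q'))"
      using is_prefix_word_eq_right[OF qq(3) _ Well_order_restrict_word[OF wy] Well_order_restrict_word[OF wz]] by blast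
    moreover have "is_prefix (restrict_word z (below z q')) z" using is_prefix_restrict_word[OF init_seg_below[OF wz]] .
    ultimately have "is_prefix x z" using is_prefix_trans[OF _ _ Well_order_restrict_word[OF wz] wz] by blast
    then show ?thesis by blast
  qed
qed

lemma lex_le_word_eq:
  assumes "lex_le x y" "word_eq x x'" "word_eq y y'"
    "Well_order (fst x)" "Well_order (fst x')" "Well_order (fst y)" "Well_order (fst y')"
  shows "lex_le x' y'"
  using assms unfolding lex_le_def
  using is_prefix_word_eq_left[OF word_eq_sym[OF assms(2)]] is_prefix_word_eq_right[OF assms(3)]
    str_less_word_eq_left[OF _ assms(2)] str_less_word_eq_right[OF _ assms(3)] by blast

lemma not_lex_le_shorter_init_seg:
  assumes wo: "Well_order (fst x)" and M: "init_seg x M" and L: "init_seg x L" and n: "\<not> M \<subseteq> L"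
  shows "\<not> lex_le (restrict_word x M) (restrict_word x L)"
  using is_prefix_init_seg_subset[OF wo M L] not_str_less_init_segs[OF wo M L] n unfolding lex_le_def by blast

lemma not_lex_le_if_str_less:
  assumes "lex_le P r" "str_less r P" "Well_order (fst P)" "Well_order (fst r)"
  shows False
  using assms is_prefix_not_str_less(2) str_less_asym unfolding lex_le_def by blast

lemma lex_le_is_prefix_left:
  assumes "is_prefix x P" "lex_le P s" "Well_order (fst x)" "Well_order (fst P)" "Well_order (fst s)"
  shows "lex_le x s"
  using assms is_prefix_trans is_prefix_str_less unfolding lex_le_def by blast

lemma lex_less_init_seg_psubset:
  assumes wo: "Well_order (fst x)" and L': "init_seg x L'" and L: "init_seg x L"
    and l: "lex_less (restrict_word x L') (restrict_word x L)"
  shows "L' \<subseteq> L \<and> L' \<noteq> L"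
  using l is_prefix_init_seg_subset[OF wo L' L] not_str_less_init_segs[OF wo L' L] word_eq_refl
  unfolding lex_less_def lex_le_def by blast

lemma lex_le_is_prefix_right:
  assumes "lex_le a b" "is_prefix b c" "Well_order (fst a)" "Well_order (fst b)" "Well_order (fst c)"
  shows "is_prefix a c \<or> str_less a c"
  using assms is_prefix_trans str_less_is_prefix_right unfolding lex_le_def by blast

lemma lex_less_word_eq:
  assumes "lex_less x y" "word_eq x x'" "word_eq y y'"
    "Well_order (fst x)" "Well_order (fst x')" "Well_order (fst y)" "Well_order (fst y')"
  shows "lex_less x' y'"
proof -
  have "lex_le x' y'" using lex_le_word_eq[of x y x' y'] assms unfolding lex_less_def by blast
  moreover have "\<not> word_eq x' y'"
  proof
    assume "word_eq x' y'"
    then have "word_eq x y" using assms(2,3) word_eq_trans word_eq_sym by metis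
    then show False using assms(1) unfolding lex_less_def by blast
  qed
  ultimately show ?thesis unfolding lex_less_def by blast
qed

lemma primitive_word_eq: "word_eq x x' \<Longrightarrow> primitive x \<Longrightarrow> primitive x'"
  unfolding primitive_def using word_eq_trans word_eq_sym by metis

lemma primitive_nonempty:
  fixes x :: "('p, 'a) word"
  assumes "primitive x"
  shows "Field (fst x) \<noteq> {}"
proof
  assume e: "Field (fst x) = {}"
  let ?A = "{} :: nat rel"
  let ?y = "({} :: nat rel, \<lambda>_. undefined) :: (nat, 'a) word"
  have wA: "Well_order ?A" by (simp add: well_order_on_def linear_order_on_def partial_order_on_def
        preorder_on_def refl_on_def trans_def antisym_def total_on_def)
  have wy: "wf_word ?y" using wA by (simp add: wf_word_def)
  have "Field (fst (word_pow ?y ?A)) = {}" by (auto simp: word_pow_def word_prod_def Field_def)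
  then have "word_eq x (word_pow ?y ?A)" using e by (simp add: word_eq_def bij_betw_def)
  then have "\<exists>i. Field ?A = {i}" using assms wA wy unfolding primitive_def by blast
  then show False by simp
qed

lemma prime_word_nonempty: "prime_word x \<Longrightarrow> Field (fst x) \<noteq> {}"
  using primitive_nonempty prime_word_def by blast

lemma prime_word_word_eq:
  assumes e: "word_eq x x'" and wx: "Well_order (fst x)" and wx': "Well_order (fst x')"
    and p: "prime_word x"
  shows "prime_word x'"
  unfolding prime_word_def
proof (intro conjI allI impI)
  show "primitive x'" using primitive_word_eq[OF e] p prime_word_def by blast
next
  fix S' assume S': "init_seg x' S' \<and> S' \<noteq> {} \<and> S' \<noteq> Field (fst x')"
  obtain h where h: "word_iso x x' h" using e word_eq_iff_word_iso by blast
  define S where "S = {z \<in> Field (fst x). h z \<in> S'}"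
  note pre = word_iso_preimage_init_seg[OF h wx wx', of S', folded S_def]
  have "S \<noteq> {}" "S \<noteq> Field (fst x)" using pre(2) S' word_isoD(4)[OF h] by auto
  then have "lex_le x (restrict_word x (Field (fst x) - S))" using p pre(1) S' unfolding prime_word_def by blast
  then show "lex_le x' (restrict_word x' (Field (fst x') - S'))"
    using lex_le_word_eq[OF _ e _ wx wx' Well_order_restrict_word[OF wx] Well_order_restrict_word[OF wx']]
      pre(3) S' word_eq_iff_word_iso by blast
qed

section \<open>Products\<close>

lemma word_prod_rel: "((i,p),(j,q)) \<in> fst (word_prod B v) \<longleftrightarrow> i \<in> Field B \<and> j \<in> Field B \<and>
   p \<in> Field (fst (v i)) \<and> q \<in> Field (fst (v j)) \<and> ((i \<noteq> j \<and> (i,j) \<in> B) \<or> (i = j \<and> (p,q) \<in> fst (v i)))"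
  by (simp add: word_prod_def)

lemma word_prod_snd[simp]: "snd (word_prod B v) (i,p) = snd (v i) p"
  by (simp add: word_prod_def)

lemma Field_word_prod:
  assumes "\<forall>i\<in>Field B. Well_order (fst (v i))"
  shows "Field (fst (word_prod B v)) = Sigma (Field B) (\<lambda>i. Field (fst (v i)))"
proof
  show "Field (fst (word_prod B v)) \<subseteq> Sigma (Field B) (\<lambda>i. Field (fst (v i)))"
    by (auto simp: Field_def word_prod_def)
next
  show "Sigma (Field B) (\<lambda>i. Field (fst (v i))) \<subseteq> Field (fst (word_prod B v))"
  proof
    fix z assume "z \<in> Sigma (Field B) (\<lambda>i. Field (fst (v i)))"
    then obtain i p where z: "z = (i,p)" "i \<in> Field B" "p \<in> Field (fst (v i))" by blast
    then have "(z,z) \<in> fst (word_prod B v)" using assms well_order_refl[of "fst (v i)" p]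
      by (simp add: word_prod_rel)
    then show "z \<in> Field (fst (word_prod B v))" by (auto simp: Field_def)
  qed
qed

lemma Linear_order_word_prod:
  assumes wB: "Well_order B" and wv: "\<forall>i\<in>Field B. Well_order (fst (v i))"
  shows "Linear_order (fst (word_prod B v))"
proof -
  let ?r = "fst (word_prod B v)"
  have F: "Field ?r = Sigma (Field B) (\<lambda>i. Field (fst (v i)))" using Field_word_prod[OF wv] .
  have "refl_on (Field ?r) ?r"
    unfolding refl_on_def F using wv by (auto simp: word_prod_rel intro!: well_order_refl)
  moreover have "trans ?r"
    unfolding trans_def
  proof (intro allI impI)
    fix x y z assume xy: "(x,y) \<in> ?r" and yz: "(y,z) \<in> ?r"
    obtain i p j q k s where e: "x = (i,p)" "y = (j,q)" "z = (k,s)" by (cases x, cases y, cases z) auto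
    show "(x,z) \<in> ?r"
      using xy yz wv well_order_trans[OF wB, of i j k] well_order_antisym[OF wB, of i j]
        well_order_trans[of "fst (v i)" p q s]
      unfolding e word_prod_rel by metis
  qed
  moreover have "antisym ?r"
    unfolding antisym_def
  proof (intro allI impI)
    fix x y assume xy: "(x,y) \<in> ?r" and yx: "(y,x) \<in> ?r"
    obtain i p j q where e: "x = (i,p)" "y = (j,q)" by (cases x, cases y) auto
    show "x = y"
      using xy yx wv well_order_antisym[OF wB, of i j] well_order_antisym[of "fst (v i)" p q]
      unfolding e word_prod_rel by metis
  qed
  moreover have "total_on (Field ?r) ?r"
    unfolding total_on_def
  proof (intro ballI impI)
    fix x y assume "x \<in> Field ?r" "y \<in> Field ?r" "x \<noteq> y"
    then obtain i p j q where e: "x = (i,p)" "y = (j,q)" and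
      xy: "i \<in> Field B" "p \<in> Field (fst (v i))" "j \<in> Field B" "q \<in> Field (fst (v j))"
      using F by blast
    show "(x,y) \<in> ?r \<or> (y,x) \<in> ?r"
      using xy wv well_order_total[OF wB, of i j] well_order_total[of "fst (v i)" p q]
      unfolding e word_prod_rel by blast
  qed
  moreover have "?r \<subseteq> Field ?r \<times> Field ?r" by (auto simp: Field_def)
  ultimately show ?thesis
    unfolding linear_order_on_def partial_order_on_def preorder_on_def by blast
qed

lemma Well_order_word_prod:
  assumes wB: "Well_order B" and wv: "\<forall>i\<in>Field B. Well_order (fst (v i))"
  shows "Well_order (fst (word_prod B v))"
proof -
  let ?r = "fst (word_prod B v)"
  have F: "Field ?r = Sigma (Field B) (\<lambda>i. Field (fst (v i)))" using Field_word_prod[OF wv] .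
  have "\<exists>z\<in>Q. \<forall>z'\<in>Q. (z, z') \<in> ?r" if Q: "Q \<subseteq> Field ?r" "Q \<noteq> {}" for Q
  proof -
    have QF: "fst ` Q \<subseteq> Field B" "\<And>i. {p. (i, p) \<in> Q} \<subseteq> Field (fst (v i))"
      using Q(1) F by auto
    obtain z where "z \<in> Q" using Q(2) by blast
    then obtain i0 where i0: "i0 \<in> fst ` Q" "\<forall>i\<in>fst ` Q. (i0, i) \<in> B"
      using well_order_least[OF wB QF(1), of "fst z"] by blast
    then have i0F: "i0 \<in> Field B" using QF(1) by blast
    obtain p1 where "(i0, p1) \<in> Q" using i0(1) by force
    then obtain p0 where p0: "(i0, p0) \<in> Q" "\<forall>p\<in>{p. (i0, p) \<in> Q}. (p0, p) \<in> fst (v i0)"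
      using well_order_least[OF _ QF(2), of i0 p1] wv i0F by blast
    have "((i0, p0), z') \<in> ?r" if "z' \<in> Q" for z'
    proof -
      obtain j q where jq: "(j, q) \<in> Q" and z': "z' = (j, q)" using \<open>z' \<in> Q\<close> by (cases z') auto
      have j: "(i0, j) \<in> B" "j \<in> Field B" "q \<in> Field (fst (v j))"
        using i0(2) jq Q(1) F by force+
      have p0F: "p0 \<in> Field (fst (v i0))" using p0(1) Q(1) F by blast
      show ?thesis
      proof (cases "j = i0")
        case True
        then show ?thesis using p0 jq j i0F p0F z' by (simp add: word_prod_rel)
      next
        case False
        then show ?thesis using j i0F p0F z' by (simp add: word_prod_rel)
      qed
    qed
    then show ?thesis using p0(1) by blast
  qed
  then show ?thesis
    using Linear_order_word_prod[OF wB wv] Linear_order_Well_order_iff by blast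
qed

lemma word_iso_word_prod_factor:
  assumes wB: "Well_order B" and wv: "\<forall>i\<in>Field B. Well_order (fst (v i))" and b: "b \<in> Field B"
  shows "word_iso (v b) (restrict_word (word_prod B v) ({b} \<times> Field (fst (v b)))) (Pair b)"
  unfolding word_iso_def
proof (intro conjI ballI)
  have "Field (fst (restrict_word (word_prod B v) ({b} \<times> Field (fst (v b))))) = {b} \<times> Field (fst (v b))"
    using Field_word_prod[OF wv] Well_order_word_prod[OF wB wv] b by auto
  then show "bij_betw (Pair b) (Field (fst (v b)))
      (Field (fst (restrict_word (word_prod B v) ({b} \<times> Field (fst (v b))))))"
    by (auto simp: bij_betw_def inj_on_def)
next
  fix p q assume "p \<in> Field (fst (v b))" "q \<in> Field (fst (v b))"
  then show "(p, q) \<in> fst (v b) \<longleftrightarrow>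
      ((b, p), (b, q)) \<in> fst (restrict_word (word_prod B v) ({b} \<times> Field (fst (v b))))"
    using b by (simp add: word_prod_rel)
qed simp

lemma restrict_word_word_prod_Sigma:
  assumes "Well_order B" "J \<subseteq> Field B"
  shows "restrict_word (word_prod B v) (Sigma J (\<lambda>i. Field (fst (v i)))) = word_prod (Restr B J) v"
proof -
  have FJ: "Field (Restr B J) = J" using assms by auto
  show ?thesis
    unfolding restrict_word_def word_prod_def prod_eq_iff fst_conv snd_conv FJ
    using assms(2) by blast
qed

lemma word_iso_word_prod:
  assumes e: "iso B B' e"
    and wv: "\<forall>i\<in>Field B. Well_order (fst (v i))" and wv': "\<forall>i\<in>Field B'. Well_order (fst (v' i))"
    and g: "\<And>i. i \<in> Field B \<Longrightarrow> word_iso (v i) (v' (e i)) (g i)"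
  shows "word_iso (word_prod B v) (word_prod B' v') (\<lambda>(i, p). (e i, g i p))"
  unfolding word_iso_def Field_word_prod[OF wv] Field_word_prod[OF wv']
proof (intro conjI ballI)
  have e_bij: "bij_betw e (Field B) (Field B')" and
    e_rel: "\<And>i j. i \<in> Field B \<Longrightarrow> j \<in> Field B \<Longrightarrow> (i, j) \<in> B \<longleftrightarrow> (e i, e j) \<in> B'"
    using e unfolding iso_iff2 by blast+
  then have e_inj: "\<And>i j. i \<in> Field B \<Longrightarrow> j \<in> Field B \<Longrightarrow> e i = e j \<longleftrightarrow> i = j"
    by (auto simp: bij_betw_def dest: inj_onD)
  show "bij_betw (\<lambda>(i, p). (e i, g i p)) (Sigma (Field B) (\<lambda>i. Field (fst (v i))))
      (Sigma (Field B') (\<lambda>i. Field (fst (v' i))))"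
    unfolding bij_betw_def
  proof
    show "inj_on (\<lambda>(i, p). (e i, g i p)) (Sigma (Field B) (\<lambda>i. Field (fst (v i))))"
      using e_inj word_isoD(5)[OF g] by (auto simp: inj_on_def)
    have "(j, q) \<in> (\<lambda>(i, p). (e i, g i p)) ` Sigma (Field B) (\<lambda>i. Field (fst (v i)))"
      if jq: "j \<in> Field B'" "q \<in> Field (fst (v' j))" for j q
    proof -
      have "j \<in> e ` Field B" using jq(1) e_bij by (simp add: bij_betw_def)
      then obtain i where i: "i \<in> Field B" "j = e i" by blast
      then obtain p where "p \<in> Field (fst (v i))" "q = g i p"
        using jq(2) word_isoD(4)[OF g[OF i(1)]] by auto
      then show ?thesis using i by force
    qed
    then show "(\<lambda>(i, p). (e i, g i p)) ` Sigma (Field B) (\<lambda>i. Field (fst (v i))) =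
        Sigma (Field B') (\<lambda>i. Field (fst (v' i)))"
      using e_bij word_isoD(6)[OF g] by (auto simp: bij_betw_def)
  qed
  fix x y assume "x \<in> Sigma (Field B) (\<lambda>i. Field (fst (v i)))" "y \<in> Sigma (Field B) (\<lambda>i. Field (fst (v i)))"
  then obtain i p j q where xy: "x = (i, p)" "y = (j, q)" and
    F: "i \<in> Field B" "p \<in> Field (fst (v i))" "j \<in> Field B" "q \<in> Field (fst (v j))" by blast
  have "e i \<in> Field B'" "e j \<in> Field B'" using F e_bij by (auto simp: bij_betw_def)
  then show "(x, y) \<in> fst (word_prod B v) \<longleftrightarrow>
      ((\<lambda>(i, p). (e i, g i p)) x, (\<lambda>(i, p). (e i, g i p)) y) \<in> fst (word_prod B' v')"
    using F e_inj e_rel word_isoD(2,6)[OF g] unfolding xy prod.case word_prod_rel by auto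
next
  fix x assume "x \<in> Sigma (Field B) (\<lambda>i. Field (fst (v i)))"
  then show "snd (word_prod B' v') ((\<lambda>(i, p). (e i, g i p)) x) = snd (word_prod B v) x"
    using word_isoD(3)[OF g] by auto
qed

lemma countable_well_order_nat_copy:
  assumes "Well_order B" "countable (Field B)"
  obtains B' :: "nat rel" and e where "Well_order B'" "iso B B' e"
  using Well_order_dir_image dir_image_iso inj_on_to_nat_on assms by blast

lemma countable_word_nat_copy:
  fixes y :: "('p, 'a) word"
  assumes wy: "Well_order (fst y)" and cy: "countable (Field (fst y))"
  obtains y' :: "(nat, 'a) word" and f where "wf_word y'" "word_iso y y' f"
proof -
  define f where "f = to_nat_on (Field (fst y))"
  have inj: "inj_on f (Field (fst y))" using cy unfolding f_def by (rule inj_on_to_nat_on)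
  define y' where "y' = ((dir_image (fst y) f, \<lambda>n. snd y (inv_into (Field (fst y)) f n)) :: (nat, 'a) word)"
  have "wf_word y'"
    using Well_order_dir_image[OF wy inj] unfolding wf_word_def y'_def by simp
  moreover have "word_iso y y' f"
    using dir_image_iso[OF wy inj] inj unfolding word_iso_def iso_iff2 y'_def by simp
  ultimately show thesis using that by blast
qed

lemma not_primitive_word_prod:
  assumes wB: "Well_order B" and cB: "countable (Field B)"
    and ij: "i \<in> Field B" "j \<in> Field B" "i \<noteq> j"
    and wv: "\<forall>k\<in>Field B. Well_order (fst (v k))"
    and y: "Well_order (fst y)" "countable (Field (fst y))" and eq: "\<forall>k\<in>Field B. word_eq (v k) y"
  shows "\<not> primitive (word_prod B v)"
proof
  assume prim: "primitive (word_prod B v)"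
  obtain B' :: "nat rel" and e where B': "Well_order B'" "iso B B' e"
    using countable_well_order_nat_copy[OF wB cB] .
  obtain y' :: "(nat, _) word" and f where y': "wf_word y'" "word_iso y y' f"
    using countable_word_nat_copy[OF y] .
  have "\<forall>k\<in>Field B. \<exists>g. word_iso (v k) y' g"
    using eq y'(2) word_iso_comp unfolding word_eq_iff_word_iso by blast
  then obtain g where g: "\<And>k. k \<in> Field B \<Longrightarrow> word_iso (v k) y' (g k)" by metis
  have "word_iso (word_prod B v) (word_pow y' B') (\<lambda>(k, p). (e k, g k p))"
    unfolding word_pow_def using word_iso_word_prod[OF B'(2) wv _ g] y'(1) by (simp add: wf_word_def)
  then obtain k where "Field B' = {k}"
    using prim B'(1) y'(1) unfolding primitive_def word_eq_iff_word_iso by blast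
  moreover have "e i \<in> Field B'" "e j \<in> Field B'" "e i \<noteq> e j"
    using B'(2) ij unfolding iso_iff2 bij_betw_def inj_on_def by blast+
  ultimately show False by (metis singletonD)
qed


section \<open>Densely non-increasing sequences\<close>

text \<open>A closed interval \<open>[g, d]\<close> is a half-open one \<open>[g, d')\<close>, where \<open>d'\<close> is the
  successor of \<open>d\<close>, or \<open>None\<close> (standing for the end of the index order) if \<open>d\<close> is last.\<close>

lemma closed_interval_ivl:
  assumes wA: "Well_order A" and d: "d \<in> Field A" and gd: "(g, d) \<in> A"
  obtains g' where "case g' of None \<Rightarrow> True | Some e \<Rightarrow> e \<in> Field A \<and> (g, e) \<in> A \<and> g \<noteq> e"
    "ivl A g g' = {b \<in> Field A. (g, b) \<in> A \<and> (b, d) \<in> A}"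
proof (cases "\<exists>e\<in>Field A. (d, e) \<in> A \<and> e \<noteq> d")
  case True
  then obtain e where e: "e \<in> Field A" "(d, e) \<in> A" "e \<noteq> d"
    and least: "\<forall>e'\<in>Field A. (d, e') \<in> A \<and> e' \<noteq> d \<longrightarrow> (e, e') \<in> A"
    using well_order_least[OF wA, of "{e\<in>Field A. (d, e) \<in> A \<and> e \<noteq> d}"] by blast
  have "(b, e) \<in> A \<and> b \<noteq> e \<longleftrightarrow> (b, d) \<in> A" if "b \<in> Field A" for b
    using that e least well_order_total[OF wA that d] well_order_trans[OF wA, of b d e]
      well_order_antisym[OF wA] by blast
  then have "ivl A g (Some e) = {b \<in> Field A. (g, b) \<in> A \<and> (b, d) \<in> A}"
    by (auto simp: ivl_def)
  moreover have "(g, e) \<in> A" "g \<noteq> e"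
    using e gd well_order_trans[OF wA gd] well_order_antisym[OF wA, of d e] by blast+
  ultimately show thesis using that[of "Some e"] e by simp
next
  case False
  then have "\<forall>b\<in>Field A. (b, d) \<in> A"
    using well_order_total[OF wA _ d] well_order_refl[OF wA d] by blast
  then show thesis using that[of None] by (auto simp: ivl_def)
qed

lemma dense_nonincr_closed_interval:
  assumes wA: "Well_order A" and dn: "dense_nonincr A u"
    and g: "g \<in> Field A" and d: "d \<in> Field A" and gd: "(g, d) \<in> A"
  shows "(\<forall>b\<in>Field A. (g, b) \<in> A \<and> (b, d) \<in> A \<longrightarrow> word_eq (u b) (u g)) \<or>
    (\<exists>b\<in>Field A. \<exists>b'\<in>Field A. (g, b) \<in> A \<and> (b', d) \<in> A \<and> (b, b') \<in> A \<and> b \<noteq> b' \<and>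
       lex_less (u b') (u b))"
proof -
  obtain g' where g': "case g' of None \<Rightarrow> True | Some e \<Rightarrow> e \<in> Field A \<and> (g, e) \<in> A \<and> g \<noteq> e"
    and ivl: "ivl A g g' = {b \<in> Field A. (g, b) \<in> A \<and> (b, d) \<in> A}"
    using closed_interval_ivl[OF wA d gd] .
  have "(\<forall>b\<in>ivl A g g'. word_eq (u b) (u g)) \<or>
      (\<exists>b\<in>ivl A g g'. \<exists>b'\<in>ivl A g g'. (b, b') \<in> A \<and> b \<noteq> b' \<and> lex_less (u b') (u b))"
    using dn g g' unfolding dense_nonincr_def by blast
  then show ?thesis unfolding ivl by blast
qed

section \<open>The product of a densely non-increasing sequence of prime words\<close>

locale dense_prime_product =
  fixes A :: "'i rel" and u :: "'i \<Rightarrow> ('p, 'a::linorder) word" and b0 :: 'i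
  assumes Well_order_A: "Well_order A" and countable_A: "countable (Field A)"
    and b0_in_A: "b0 \<in> Field A" and b0_least: "\<forall>b\<in>Field A. (b0, b) \<in> A"
    and prime_factors: "\<forall>b\<in>Field A. wf_word (u b) \<and> prime_word (u b)"
    and dense: "dense_nonincr A u"
begin

definition w :: "('i \<times> 'p, 'a) word" where
  "w = word_prod A u"

definition block :: "'i \<Rightarrow> ('i \<times> 'p) set" where
  "block b = {b} \<times> Field (fst (u b))"

abbreviation B0 :: "('i \<times> 'p) set" where
  "B0 \<equiv> block b0"

lemma Well_order_u: "b \<in> Field A \<Longrightarrow> Well_order (fst (u b))"
  using prime_factors by (auto simp: wf_word_def)

lemma prime_u: "b \<in> Field A \<Longrightarrow> prime_word (u b)"
  using prime_factors by blast

lemma Well_order_w: "Well_order (fst w)"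
  unfolding w_def by (rule Well_order_word_prod[OF Well_order_A]) (use Well_order_u in blast)

lemma Well_order_restrict_w: "Well_order (fst (restrict_word w X))"
  using Well_order_restrict_word[OF Well_order_w] .

lemma Field_w: "Field (fst w) = Sigma (Field A) (\<lambda>i. Field (fst (u i)))"
  unfolding w_def by (rule Field_word_prod) (use Well_order_u in blast)

lemma Field_restrict_w: "Field (fst (restrict_word w X)) = X \<inter> Field (fst w)"
  using Well_order_w by simp

lemma w_rel: "((i,p),(j,q)) \<in> fst w \<longleftrightarrow> i \<in> Field A \<and> j \<in> Field A \<and>
   p \<in> Field (fst (u i)) \<and> q \<in> Field (fst (u j)) \<and> ((i \<noteq> j \<and> (i,j) \<in> A) \<or> (i = j \<and> (p,q) \<in> fst (u i)))"
  unfolding w_def by (rule word_prod_rel)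

lemma w_rel_index: "(x, y) \<in> fst w \<Longrightarrow> (fst x, fst y) \<in> A"
  using w_rel[of "fst x" "snd x" "fst y" "snd y"] well_order_refl[OF Well_order_A] by auto

lemma block_subset_Field: "b \<in> Field A \<Longrightarrow> block b \<subseteq> Field (fst w)"
  using Field_w by (auto simp: block_def)

lemma block_nonempty: "b \<in> Field A \<Longrightarrow> block b \<noteq> {}"
  using prime_word_nonempty[OF prime_u] by (auto simp: block_def)

lemma u_word_eq_block: "b \<in> Field A \<Longrightarrow> word_eq (u b) (restrict_word w (block b))"
  unfolding w_def block_def word_eq_iff_word_iso
  using word_iso_word_prod_factor[OF Well_order_A] Well_order_u by blast

lemma block_word_eq:
  "word_eq (u b) (u b') \<Longrightarrow> b \<in> Field A \<Longrightarrow> b' \<in> Field A \<Longrightarrow>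
   word_eq (restrict_word w (block b)) (restrict_word w (block b'))"
  using u_word_eq_block word_eq_trans word_eq_sym by metis

lemma block_lex_less:
  "lex_less (u b') (u b) \<Longrightarrow> b \<in> Field A \<Longrightarrow> b' \<in> Field A \<Longrightarrow>
   lex_less (restrict_word w (block b')) (restrict_word w (block b))"
  using lex_less_word_eq[OF _ u_word_eq_block u_word_eq_block Well_order_u Well_order_restrict_w
      Well_order_u Well_order_restrict_w] by blast

lemma init_seg_B0: "init_seg w B0"
  unfolding init_seg_def
proof (intro conjI ballI allI impI)
  show "B0 \<subseteq> Field (fst w)" using block_subset_Field[OF b0_in_A] .
next
  fix p q assume p: "p \<in> B0" and qp: "(q, p) \<in> fst w"
  obtain j s where q: "q = (j, s)" by (cases q)
  have "(j, b0) \<in> A" "j \<in> Field A" "s \<in> Field (fst (u j))"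
    using w_rel[of j s "fst p" "snd p"] w_rel_index[OF qp] p qp q by (auto simp: block_def)
  moreover have "j = b0" using calculation b0_least well_order_antisym[OF Well_order_A] by blast
  ultimately show "q \<in> B0" using q by (simp add: block_def)
qed

lemma prime_B0: "prime_word (restrict_word w B0)"
  using prime_word_word_eq[OF u_word_eq_block[OF b0_in_A] Well_order_u[OF b0_in_A]
      Well_order_restrict_w prime_u[OF b0_in_A]] .

lemma is_prefix_B0E:
  assumes "is_prefix (restrict_word w X) (restrict_word w B0)"
  obtains L where "init_seg w L" "L \<subseteq> B0" "word_eq (restrict_word w X) (restrict_word w L)"
proof -
  obtain T where T: "init_seg (restrict_word w B0) T"
    "word_eq (restrict_word w X) (restrict_word (restrict_word w B0) T)"
    using assms is_prefix_def by blast
  have "init_seg w T" "T \<subseteq> B0"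
    using init_seg_restrict_word_iff[OF Well_order_w init_seg_B0] T(1) by auto
  then show thesis using that T(2) by (simp add: Int_absorb1)
qed

lemma not_primitive_blocks:
  assumes J: "J \<subseteq> Field A" "j1 \<in> J" "j2 \<in> J" "j1 \<noteq> j2"
    and eqs: "\<forall>s\<in>J. word_eq (u s) (u j1)"
  shows "\<not> primitive (restrict_word w (Sigma J (\<lambda>i. Field (fst (u i)))))"
proof -
  have FJ: "Field (Restr A J) = J" using J(1) Well_order_A by auto
  have j1: "j1 \<in> Field A" using J by blast
  have "\<not> primitive (word_prod (Restr A J) u)"
  proof (rule not_primitive_word_prod[OF Well_order_Restr[OF Well_order_A]])
    show "countable (Field (Restr A J))" using countable_subset[OF J(1) countable_A] FJ by simp
    show "countable (Field (fst (u j1)))" using prime_factors j1 by (simp add: wf_word_def)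
    show "Well_order (fst (u j1))" using Well_order_u[OF j1] .
    show "\<forall>k\<in>Field (Restr A J). Well_order (fst (u k))" using FJ J(1) Well_order_u by blast
    show "\<forall>k\<in>Field (Restr A J). word_eq (u k) (u j1)" using FJ eqs by simp
  qed (use FJ J in simp_all)
  then show ?thesis
    unfolding w_def by (simp add: restrict_word_word_prod_Sigma[OF Well_order_A J(1)])
qed

definition shortest_block_prefix :: "'i set \<Rightarrow> ('i \<times> 'p) set \<Rightarrow> bool" where
  "shortest_block_prefix Q L \<longleftrightarrow> init_seg w L \<and> L \<subseteq> B0 \<and>
     (\<exists>g\<in>Q. word_eq (restrict_word w (block g)) (restrict_word w L)) \<and>
     (\<forall>g\<in>Q. \<forall>L'. init_seg w L' \<and> L' \<subseteq> B0 \<and>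
        word_eq (restrict_word w (block g)) (restrict_word w L') \<longrightarrow> L \<subseteq> L')"

lemma shortest_block_prefix_exists:
  assumes "b0 \<in> Q"
  obtains L where "shortest_block_prefix Q L"
proof -
  define LL where "LL = {L. init_seg w L \<and> L \<subseteq> B0 \<and>
    (\<exists>g\<in>Q. word_eq (restrict_word w (block g)) (restrict_word w L))}"
  have "B0 \<in> LL" unfolding LL_def using init_seg_B0 assms word_eq_refl by blast
  moreover have "\<forall>L\<in>LL. init_seg w L" unfolding LL_def by blast
  ultimately have "\<Inter>LL \<in> LL" using Inter_init_seg_mem[OF Well_order_w] by blast
  then have "shortest_block_prefix Q (\<Inter>LL)" unfolding shortest_block_prefix_def LL_def by blast
  then show thesis using that by blast
qed

lemma shortest_block_prefix_first:
  assumes QF: "Q \<subseteq> Field A" and L: "shortest_block_prefix Q L"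
  obtains gm where "gm \<in> Q" "word_eq (restrict_word w (block gm)) (restrict_word w L)"
    "\<forall>g\<in>Q. word_eq (restrict_word w (block g)) (restrict_word w L) \<longrightarrow> (gm, g) \<in> A"
proof -
  define G where "G = {g\<in>Q. word_eq (restrict_word w (block g)) (restrict_word w L)}"
  obtain g0 where "g0 \<in> G" using L unfolding shortest_block_prefix_def G_def by blast
  moreover have "G \<subseteq> Field A" using QF unfolding G_def by blast
  ultimately obtain gm where "gm \<in> G" "\<forall>g\<in>G. (gm, g) \<in> A"
    using well_order_least[OF Well_order_A] by blast
  then show thesis using that unfolding G_def by blast
qed

lemma not_lex_less_shortest_block_prefix:
  assumes L: "shortest_block_prefix Q L" and b': "b' \<in> Q"
    and pb': "is_prefix (restrict_word w (block b')) (restrict_word w B0)"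
    and F: "b \<in> Field A" "b' \<in> Field A" and eb: "word_eq (restrict_word w (block b)) (restrict_word w L)"
  shows "\<not> lex_less (u b') (u b)"
proof
  assume ll: "lex_less (u b') (u b)"
  obtain L' where L': "init_seg w L'" "L' \<subseteq> B0" "word_eq (restrict_word w (block b')) (restrict_word w L')"
    using is_prefix_B0E[OF pb'] .
  have "lex_less (restrict_word w L') (restrict_word w L)"
    using lex_less_word_eq[OF block_lex_less[OF ll F] L'(3) eb] Well_order_restrict_w by blast
  then have "L' \<subset> L"
    using lex_less_init_seg_psubset[OF Well_order_w L'(1)] L unfolding shortest_block_prefix_def by blast
  then show False using L L' b' unfolding shortest_block_prefix_def by blast
qed

lemma shortest_block_prefix_tail:
  assumes QF: "Q \<subseteq> Field A" and Qdown: "\<forall>g\<in>Q. \<forall>d\<in>Field A. (d, g) \<in> A \<longrightarrow> d \<in> Q"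
    and Qpre: "\<forall>g\<in>Q. is_prefix (restrict_word w (block g)) (restrict_word w B0)"
    and L: "shortest_block_prefix Q L"
    and gm: "gm \<in> Q" "word_eq (restrict_word w (block gm)) (restrict_word w L)"
  shows "\<forall>g\<in>Q. (gm, g) \<in> A \<longrightarrow> word_eq (restrict_word w (block g)) (restrict_word w L)"
proof (rule ccontr)
  define D where "D = {g\<in>Q. (gm, g) \<in> A \<and> \<not> word_eq (restrict_word w (block g)) (restrict_word w L)}"
  assume "\<not> ?thesis"
  then obtain d0 where "d0 \<in> D" unfolding D_def by blast
  then obtain d where d: "d \<in> D" "\<forall>g\<in>D. (d, g) \<in> A"
    using well_order_least[OF Well_order_A, of D] QF unfolding D_def by blast
  have dQ: "d \<in> Q" "(gm, d) \<in> A" "\<not> word_eq (restrict_word w (block d)) (restrict_word w L)"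
    using d(1) unfolding D_def by auto
  have F: "gm \<in> Field A" "d \<in> Field A" using gm dQ QF by auto
  from dense_nonincr_closed_interval[OF Well_order_A dense F dQ(2)] show False
  proof
    assume "\<forall>b\<in>Field A. (gm, b) \<in> A \<and> (b, d) \<in> A \<longrightarrow> word_eq (u b) (u gm)"
    then have "word_eq (u d) (u gm)" using F(2) dQ(2) well_order_refl[OF Well_order_A F(2)] by blast
    then show False using block_word_eq[OF _ F(2,1)] gm(2) dQ(3) word_eq_trans by blast
  next
    assume "\<exists>b\<in>Field A. \<exists>b'\<in>Field A. (gm, b) \<in> A \<and> (b', d) \<in> A \<and> (b, b') \<in> A \<and> b \<noteq> b' \<and>
      lex_less (u b') (u b)"
    then obtain b b' where bb: "b \<in> Field A" "b' \<in> Field A" "(gm, b) \<in> A" "(b', d) \<in> A"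
      "(b, b') \<in> A" "b \<noteq> b'" "lex_less (u b') (u b)" by blast
    have bd: "(b, d) \<in> A" "b \<noteq> d"
      using well_order_trans[OF Well_order_A bb(5,4)] bb well_order_antisym[OF Well_order_A] by blast+
    have bQ: "b \<in> Q" "b' \<in> Q" using Qdown dQ(1) bd bb by blast+
    have "b \<notin> D" using d bd well_order_antisym[OF Well_order_A] by blast
    then have "word_eq (restrict_word w (block b)) (restrict_word w L)" using bQ bb unfolding D_def by blast
    then show False
      using not_lex_less_shortest_block_prefix[OF L bQ(2) _ bb(1,2)] Qpre bQ(2) bb(7) by blast
  qed
qed

text \<open>By density on \<open>[gm, b1]\<close>, either \<open>u b1\<close> is isomorphic to \<open>u gm\<close>, or there is a descent
  \<open>u b' <\<^sub>l\<^sub>e\<^sub>x u b\<close> with \<open>gm \<le> b < b' \<le> b1\<close>; minimality of \<open>L\<close> forces \<open>b' = b1\<close>.\<close>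

lemma block_lex_le_prefix_B0:
  assumes b1: "b1 \<in> Field A" "b1 \<noteq> b0"
    and pre: "\<And>g. g \<in> Field A \<Longrightarrow> (g, b1) \<in> A \<Longrightarrow> g \<noteq> b1 \<Longrightarrow>
      is_prefix (restrict_word w (block g)) (restrict_word w B0)"
  obtains L where "init_seg w L" "L \<subseteq> B0" "lex_le (restrict_word w (block b1)) (restrict_word w L)"
proof -
  define Q where "Q = {g\<in>Field A. (g, b1) \<in> A \<and> g \<noteq> b1}"
  have QF: "Q \<subseteq> Field A" unfolding Q_def by blast
  have Qdown: "\<forall>g\<in>Q. \<forall>d\<in>Field A. (d, g) \<in> A \<longrightarrow> d \<in> Q"
    unfolding Q_def using well_order_trans[OF Well_order_A] well_order_antisym[OF Well_order_A] by blast
  have Qpre: "\<forall>g\<in>Q. is_prefix (restrict_word w (block g)) (restrict_word w B0)"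
    using pre unfolding Q_def by blast
  have "b0 \<in> Q" unfolding Q_def using b0_least b1 b0_in_A by auto
  then obtain L where L: "shortest_block_prefix Q L" using shortest_block_prefix_exists by blast
  then obtain gm where gm: "gm \<in> Q" "word_eq (restrict_word w (block gm)) (restrict_word w L)"
    using shortest_block_prefix_first[OF QF] by blast
  note tail = shortest_block_prefix_tail[OF QF Qdown Qpre L gm]
  have gmF: "gm \<in> Field A" "(gm, b1) \<in> A" using gm unfolding Q_def by auto
  have "lex_le (restrict_word w (block b1)) (restrict_word w L)"
    using dense_nonincr_closed_interval[OF Well_order_A dense gmF(1) b1(1) gmF(2)]
  proof
    assume "\<forall>b\<in>Field A. (gm, b) \<in> A \<and> (b, b1) \<in> A \<longrightarrow> word_eq (u b) (u gm)"
    then have "word_eq (u b1) (u gm)" using b1 gmF well_order_refl[OF Well_order_A] by blast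
    then have "word_eq (restrict_word w (block b1)) (restrict_word w L)"
      using block_word_eq[OF _ b1(1) gmF(1)] gm(2) word_eq_trans by blast
    then show ?thesis unfolding lex_le_def using is_prefix_word_eq_left[OF _ is_prefix_refl] by blast
  next
    assume "\<exists>b\<in>Field A. \<exists>b'\<in>Field A. (gm, b) \<in> A \<and> (b', b1) \<in> A \<and> (b, b') \<in> A \<and> b \<noteq> b' \<and>
      lex_less (u b') (u b)"
    then obtain b b' where bb: "b \<in> Field A" "b' \<in> Field A" "(gm, b) \<in> A" "(b', b1) \<in> A"
      "(b, b') \<in> A" "b \<noteq> b'" "lex_less (u b') (u b)" by blast
    have "b \<in> Q" using bb well_order_trans[OF Well_order_A bb(5,4)] well_order_antisym[OF Well_order_A]
      unfolding Q_def by blast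
    then have eb: "word_eq (restrict_word w (block b)) (restrict_word w L)" using tail bb(3) by blast
    have "b' \<notin> Q" using not_lex_less_shortest_block_prefix[OF L _ _ bb(1,2) eb] Qpre bb(7) by blast
    then have "b' = b1" using bb unfolding Q_def by blast
    then show ?thesis
      using lex_le_word_eq[OF _ word_eq_refl eb] block_lex_less[OF bb(7) bb(1,2)] Well_order_restrict_w
      unfolding lex_less_def by blast
  qed
  then show thesis using that L unfolding shortest_block_prefix_def by blast
qed

end

locale prime_prefix = dense_prime_product A u b0
  for A :: "'i rel" and u :: "'i \<Rightarrow> ('p, 'a::linorder) word" and b0 :: 'i +
  fixes S :: "('i \<times> 'p) set"
  assumes init_seg_S: "init_seg w S" and prime_S: "prime_word (restrict_word w S)"
    and B0_subset_S: "B0 \<subseteq> S"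
begin

abbreviation P where "P \<equiv> restrict_word w S"

definition I :: "'i set" where
  "I = fst ` S"

definition before :: "'i \<Rightarrow> ('i \<times> 'p) set" where
  "before b = {x\<in>S. (fst x, b) \<in> A \<and> fst x \<noteq> b}"

lemma S_subset_Field: "S \<subseteq> Field (fst w)"
  using init_seg_S by (auto simp: init_seg_def)

lemma Field_P: "Field (fst P) = S"
  using S_subset_Field Well_order_w by auto

lemma S_downward: "x \<in> S \<Longrightarrow> (y, x) \<in> fst w \<Longrightarrow> y \<in> S"
  using init_seg_S unfolding init_seg_def by blast

lemma I_subset_Field: "I \<subseteq> Field A"
  using S_subset_Field Field_w unfolding I_def by auto

lemma S_memD: "x \<in> S \<Longrightarrow> fst x \<in> I \<and> x \<in> block (fst x)"
  using S_subset_Field Field_w unfolding I_def block_def by (cases x) (auto intro: rev_image_eqI)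

lemma block_subset_S:
  assumes i: "i \<in> I" and j: "j \<in> Field A" and ji: "(j, i) \<in> A" "j \<noteq> i"
  shows "block j \<subseteq> S"
proof
  fix v assume v: "v \<in> block j"
  obtain p where p: "(i, p) \<in> S" using i unfolding I_def by force
  have "i \<in> Field A" "p \<in> Field (fst (u i))" using S_memD[OF p] I_subset_Field by (auto simp: block_def)
  then have "(v, (i, p)) \<in> fst w" using v j ji by (cases v) (auto simp: block_def w_rel)
  then show "v \<in> S" using S_downward[OF p] by blast
qed

lemma I_downward: "i \<in> I \<Longrightarrow> j \<in> Field A \<Longrightarrow> (j, i) \<in> A \<Longrightarrow> j \<in> I"
  using block_subset_S[of i j] block_nonempty[of j] unfolding block_def I_def
  by (cases "j = i") force+

lemma b0_in_I: "b0 \<in> I"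
  using B0_subset_S block_nonempty[OF b0_in_A] unfolding I_def block_def by force

lemma is_prefix_B0_P: "is_prefix (restrict_word w B0) P"
  using is_prefix_restrict_word_subset[OF init_seg_B0 init_seg_S B0_subset_S Well_order_w] .

lemma lex_le_suffix_P:
  assumes "init_seg P S0" "S0 \<noteq> {}" "S0 \<noteq> S"
  shows "lex_le P (restrict_word w (S - S0))"
proof -
  have "lex_le P (restrict_word P (Field (fst P) - S0))"
    using prime_S assms Field_P unfolding prime_word_def by blast
  moreover have "S \<inter> (S - S0) = S - S0" by blast
  ultimately show ?thesis unfolding Field_P by simp
qed

lemma not_str_less_suffix_P:
  assumes "init_seg P S0" "S0 \<noteq> {}" "S0 \<noteq> S"
  shows "\<not> str_less (restrict_word w (S - S0)) P"
  using not_lex_le_if_str_less[OF lex_le_suffix_P[OF assms]] Well_order_restrict_w by blast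

lemma init_seg_before: "init_seg w (before b)"
  unfolding init_seg_def
proof (intro conjI ballI allI impI)
  show "before b \<subseteq> Field (fst w)" using S_subset_Field unfolding before_def by blast
next
  fix x y assume x: "x \<in> before b" and yx: "(y, x) \<in> fst w"
  have "(fst y, fst x) \<in> A" using w_rel_index[OF yx] .
  moreover have "(fst x, b) \<in> A" "fst x \<noteq> b" using x unfolding before_def by auto
  ultimately have "(fst y, b) \<in> A" "fst y \<noteq> b"
    using well_order_trans[OF Well_order_A] well_order_antisym[OF Well_order_A] by blast+
  then show "y \<in> before b" using S_downward x yx unfolding before_def by blast
qed

lemma S_minus_before: "b \<in> Field A \<Longrightarrow> S - before b = {x\<in>S. (b, fst x) \<in> A}"
  using well_order_total[OF Well_order_A] well_order_refl[OF Well_order_A]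
    well_order_antisym[OF Well_order_A] S_memD I_subset_Field
  unfolding before_def by blast

lemma before_proper:
  assumes b: "b \<in> I" "b \<noteq> b0"
  shows "init_seg P (before b)" "before b \<noteq> {}" "before b \<noteq> S"
proof -
  show "init_seg P (before b)"
    using init_seg_restrict_word_iff[OF Well_order_w init_seg_S] init_seg_before
    unfolding before_def by blast
  obtain q where "q \<in> Field (fst (u b0))" using block_nonempty[OF b0_in_A] unfolding block_def by blast
  then have "(b0, q) \<in> before b"
    using B0_subset_S b0_least I_subset_Field b unfolding before_def block_def by auto
  then show "before b \<noteq> {}" by blast
  obtain p where "(b, p) \<in> S" using b unfolding I_def by force
  then show "before b \<noteq> S" unfolding before_def by force
qed

lemma is_prefix_partial_block:
  assumes "b \<in> Field A"
  shows "is_prefix (restrict_word w (S \<inter> block b)) (restrict_word w (block b))"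
proof -
  have "init_seg (restrict_word w (block b)) (S \<inter> block b)"
    unfolding init_seg_def Field_restrict_w using block_subset_Field[OF assms] S_downward by auto
  then have "is_prefix (restrict_word (restrict_word w (block b)) (S \<inter> block b)) (restrict_word w (block b))"
    by (rule is_prefix_restrict_word)
  moreover have "block b \<inter> (S \<inter> block b) = S \<inter> block b" by blast
  ultimately show ?thesis by simp
qed

lemma before_mono: "(g, s) \<in> A \<Longrightarrow> before g \<subseteq> before s"
  unfolding before_def using well_order_trans[OF Well_order_A] well_order_antisym[OF Well_order_A]
  by blast

lemma init_seg_partial_block_suffix:
  assumes b: "b \<in> I"
  shows "init_seg (restrict_word w (S - before b)) (S \<inter> block b)"
  unfolding init_seg_def
proof (intro conjI ballI allI impI)
  have bF: "b \<in> Field A" using b I_subset_Field by blast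
  show "S \<inter> block b \<subseteq> Field (fst (restrict_word w (S - before b)))"
    unfolding Field_restrict_w using S_subset_Field bF by (auto simp: block_def before_def)
next
  fix x y assume x: "x \<in> S \<inter> block b" and yx: "(y, x) \<in> fst (restrict_word w (S - before b))"
  then have "(fst y, b) \<in> A" "y \<in> S" "y \<notin> before b"
    using w_rel_index[of y x] by (auto simp: block_def)
  then show "y \<in> S \<inter> block b" using S_memD[of y] unfolding before_def by auto
qed

lemma is_prefix_partial_block_suffix:
  assumes b: "b \<in> I"
  shows "is_prefix (restrict_word w (S \<inter> block b)) (restrict_word w (S - before b))"
proof (rule is_prefix_restrict_word_init_seg[OF init_seg_partial_block_suffix[OF b]])
  show "S \<inter> block b \<subseteq> S - before b" by (auto simp: block_def before_def)
qed

lemma not_str_less_partial_block_B0: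
  assumes b: "b \<in> I" "b \<noteq> b0"
  shows "\<not> str_less (restrict_word w (S \<inter> block b)) (restrict_word w B0)"
proof
  assume "str_less (restrict_word w (S \<inter> block b)) (restrict_word w B0)"
  then have "str_less (restrict_word w (S - before b)) (restrict_word w B0)"
    using str_less_is_prefix_left[OF _ is_prefix_partial_block_suffix[OF b(1)]] Well_order_restrict_w
    by blast
  then have "str_less (restrict_word w (S - before b)) P"
    using str_less_is_prefix_right[OF _ is_prefix_B0_P] Well_order_restrict_w by blast
  then show False using not_str_less_suffix_P before_proper[OF b] by blast
qed

lemma partial_block_prefix_B0_if_lex_le:
  assumes b: "b \<in> I" "b \<noteq> b0" and L: "init_seg w L" "L \<subseteq> B0"
    and le: "lex_le (restrict_word w (block b)) (restrict_word w L)"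
  shows "is_prefix (restrict_word w (S \<inter> block b)) (restrict_word w B0)"
proof -
  have bF: "b \<in> Field A" using b I_subset_Field by blast
  note partial = is_prefix_partial_block[OF bF]
  have "is_prefix (restrict_word w (block b)) (restrict_word w B0) \<or>
      str_less (restrict_word w (block b)) (restrict_word w B0)"
    using lex_le_is_prefix_right[OF le is_prefix_restrict_word_subset[OF L(1) init_seg_B0 L(2)]]
      Well_order_w Well_order_restrict_w by blast
  then show ?thesis
    using is_prefix_trans[OF partial] is_prefix_str_less[OF partial]
      not_str_less_partial_block_B0[OF b] Well_order_restrict_w by blast
qed

lemma partial_blocks_prefix_B0: "\<forall>b\<in>I. is_prefix (restrict_word w (S \<inter> block b)) (restrict_word w B0)"
proof (rule ccontr)
  define D where "D = {b\<in>I. \<not> is_prefix (restrict_word w (S \<inter> block b)) (restrict_word w B0)}"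
  assume "\<not> ?thesis"
  then obtain d0 where "d0 \<in> D" unfolding D_def by blast
  then obtain b1 where b1: "b1 \<in> D" "\<forall>g\<in>D. (b1, g) \<in> A"
    using well_order_least[OF Well_order_A, of D] I_subset_Field unfolding D_def by blast
  have b1I: "b1 \<in> I" and b1n: "\<not> is_prefix (restrict_word w (S \<inter> block b1)) (restrict_word w B0)"
    using b1(1) unfolding D_def by auto
  have b1F: "b1 \<in> Field A" using b1I I_subset_Field by blast
  have b1ne: "b1 \<noteq> b0" using b1n B0_subset_S is_prefix_refl Int_absorb1 by metis
  have "is_prefix (restrict_word w (block g)) (restrict_word w B0)"
    if g: "g \<in> Field A" "(g, b1) \<in> A" "g \<noteq> b1" for g
  proof -
    have "g \<in> I" "block g \<subseteq> S" "g \<notin> D"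
      using I_downward[OF b1I g(1,2)] block_subset_S[OF b1I g] b1(2) g(2,3)
        well_order_antisym[OF Well_order_A] by blast+
    then show ?thesis unfolding D_def by (simp add: Int_absorb1)
  qed
  then obtain Lm where "init_seg w Lm" "Lm \<subseteq> B0"
    "lex_le (restrict_word w (block b1)) (restrict_word w Lm)"
    using block_lex_le_prefix_B0[OF b1F b1ne] by blast
  then show False using partial_block_prefix_B0_if_lex_le[OF b1I b1ne] b1n by blast
qed

lemma greatest_index_eq_b0:
  assumes k: "k \<in> I" "\<forall>j\<in>I. (j, k) \<in> A"
  shows "k = b0"
proof (rule ccontr)
  assume kb0: "k \<noteq> b0"
  have kF: "k \<in> Field A" using k I_subset_Field by blast
  have "S - before k = S \<inter> block k"
    unfolding S_minus_before[OF kF]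
    using k(2) S_memD well_order_antisym[OF Well_order_A] well_order_refl[OF Well_order_A kF]
    by (fastforce simp: block_def)
  then have le: "lex_le P (restrict_word w (S \<inter> block k))"
    using lex_le_suffix_P before_proper[OF k(1) kb0] by metis
  obtain L where L: "init_seg w L" "L \<subseteq> B0" "word_eq (restrict_word w (S \<inter> block k)) (restrict_word w L)"
    using is_prefix_B0E partial_blocks_prefix_B0 k(1) by blast
  have "lex_le P (restrict_word w L)"
    using lex_le_word_eq[OF le word_eq_refl L(3)] Well_order_restrict_w by blast
  moreover obtain p where "(k, p) \<in> S" using k(1) unfolding I_def by force
  then have "\<not> S \<subseteq> L" using L(2) kb0 by (auto simp: block_def)
  ultimately show False using not_lex_le_shorter_init_seg[OF Well_order_w init_seg_S L(1)] by blast
qed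


lemma not_str_less_B0_suffix_P:
  assumes S0: "init_seg w S0" "S0 \<subseteq> B0"
  shows "\<not> str_less (restrict_word w (B0 - S0)) P"
proof
  assume str: "str_less (restrict_word w (B0 - S0)) P"
  consider "S0 = {}" | "S0 = S" | "S0 \<noteq> {}" "S0 \<noteq> S" by blast
  then show False
  proof cases
    case 1
    then show False
      using str is_prefix_not_str_less(1)[OF is_prefix_B0_P] Well_order_restrict_w by simp
  next
    case 2
    then have "Field (fst (restrict_word w (B0 - S0))) = {}" using B0_subset_S Field_restrict_w by auto
    then show False using str by (auto elim: str_lessE)
  next
    case 3
    have "init_seg (restrict_word w (S - S0)) ((S - S0) \<inter> B0)"
      using init_seg_restrict_word_Int[OF Well_order_w init_seg_B0] .
    moreover have "(S - S0) \<inter> B0 = B0 - S0" using B0_subset_S by blast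
    ultimately have "is_prefix (restrict_word (restrict_word w (S - S0)) (B0 - S0)) (restrict_word w (S - S0))"
      using is_prefix_restrict_word by metis
    moreover have "(S - S0) \<inter> (B0 - S0) = B0 - S0" using B0_subset_S by blast
    ultimately have "is_prefix (restrict_word w (B0 - S0)) (restrict_word w (S - S0))" by simp
    then have "str_less (restrict_word w (S - S0)) P"
      using str_less_is_prefix_left[OF str] Well_order_restrict_w by blast
    moreover have "init_seg P S0"
      using init_seg_restrict_word_iff[OF Well_order_w init_seg_S] S0 B0_subset_S by blast
    ultimately show False using not_str_less_suffix_P 3 by blast
  qed
qed

context
  fixes gm Lm
  assumes gm: "gm \<in> I" and Lm: "init_seg w Lm" "Lm \<subseteq> B0"
    and tail: "\<forall>s\<in>I. (gm, s) \<in> A \<longrightarrow> word_eq (restrict_word w (block s)) (restrict_word w Lm)"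
    and full: "\<forall>b\<in>I. block b \<subseteq> S"
begin

lemma S_minus_before_gm: "S - before gm = {x\<in>S. (gm, fst x) \<in> A}"
  using S_minus_before gm I_subset_Field by blast

lemma block_subset_tail: "s \<in> I \<Longrightarrow> (gm, s) \<in> A \<Longrightarrow> block s \<subseteq> S - before gm"
  using full S_minus_before_gm by (auto simp: block_def)

lemma str_less_B0_tail_block:
  assumes "str_less (restrict_word w B0) (restrict_word w (S - before gm))"
  obtains s S0 where "s \<in> I" "(gm, s) \<in> A" "init_seg w S0" "S0 \<subseteq> B0"
    "str_less (restrict_word w (B0 - S0)) (restrict_word w (block s))"
proof -
  let ?T = "S - before gm"
  obtain c c' where at: "str_less_at (restrict_word w B0) (restrict_word w ?T) c c'"
    using assms unfolding str_less_iff_str_less_at by blast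
  define s where "s = fst c'"
  have c': "c' \<in> ?T" "c' \<in> block s" "s \<in> I" "(gm, s) \<in> A"
    using at S_memD S_minus_before_gm unfolding str_less_at_def Field_restrict_w s_def by auto
  have Y: "init_seg (restrict_word w ?T) (?T \<inter> before s)" "c' \<notin> ?T \<inter> before s"
    using init_seg_restrict_word_Int[OF Well_order_w init_seg_before] c'(2)
    by (auto simp: before_def block_def)
  obtain S0 where S0: "init_seg (restrict_word w B0) S0"
    and at': "str_less_at (restrict_word (restrict_word w B0) (Field (fst (restrict_word w B0)) - S0))
      (restrict_word (restrict_word w ?T) (Field (fst (restrict_word w ?T)) - ?T \<inter> before s)) c c'"
    using str_less_at_suffix[OF Well_order_restrict_w Well_order_restrict_w at Y] by blast
  have F: "Field (fst (restrict_word w B0)) = B0" "Field (fst (restrict_word w ?T)) = ?T"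
    using block_subset_Field[OF b0_in_A] S_subset_Field Field_restrict_w by blast+
  have "B0 \<inter> (B0 - S0) = B0 - S0" "?T \<inter> (?T - ?T \<inter> before s) = S - before s"
    using before_mono[OF c'(4)] by blast+
  then have "str_less_at (restrict_word w (B0 - S0)) (restrict_word w (S - before s)) c c'"
    using at' by (simp only: F restrict_word_restrict_word)
  moreover have "init_seg (restrict_word w (S - before s)) (block s)"
    using init_seg_partial_block_suffix[OF c'(3)] full c'(3) by (simp add: Int_absorb1)
  ultimately have "str_less (restrict_word w (B0 - S0)) (restrict_word w ((S - before s) \<inter> block s))"
    using str_less_at_restrict_right[OF _ _ c'(2) Well_order_restrict_w] by simp
  moreover have "(S - before s) \<inter> block s = block s"
    using full c'(3) by (auto simp: before_def block_def)
  ultimately have "str_less (restrict_word w (B0 - S0)) (restrict_word w (block s))" by simp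
  moreover have "init_seg w S0" "S0 \<subseteq> B0"
    using init_seg_restrict_word_iff[OF Well_order_w init_seg_B0] S0 by auto
  ultimately show thesis using that c'(3,4) by blast
qed

lemma not_str_less_B0_tail: "\<not> str_less (restrict_word w B0) (restrict_word w (S - before gm))"
proof
  assume "str_less (restrict_word w B0) (restrict_word w (S - before gm))"
  then obtain s S0 where s: "s \<in> I" "(gm, s) \<in> A" and S0: "init_seg w S0" "S0 \<subseteq> B0"
    and str: "str_less (restrict_word w (B0 - S0)) (restrict_word w (block s))"
    by (rule str_less_B0_tail_block)
  have "str_less (restrict_word w (B0 - S0)) (restrict_word w Lm)"
    using str_less_word_eq_right[OF str] tail s Well_order_restrict_w by blast
  moreover have "is_prefix (restrict_word w Lm) P"
    using is_prefix_restrict_word_subset[OF Lm(1) init_seg_S] Lm(2) B0_subset_S Well_order_w by blast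
  ultimately have "str_less (restrict_word w (B0 - S0)) P"
    using str_less_is_prefix_right Well_order_restrict_w by blast
  then show False using not_str_less_B0_suffix_P[OF S0] by blast
qed

lemma B0_prefix_tailE:
  assumes "is_prefix (restrict_word w B0) (restrict_word w (S - before gm))"
  obtains S2 where "init_seg (restrict_word w (S - before gm)) S2" "S2 \<subseteq> S - before gm"
    "word_eq (restrict_word w B0) (restrict_word w S2)"
proof -
  obtain S2 where S2: "init_seg (restrict_word w (S - before gm)) S2"
    "word_eq (restrict_word w B0) (restrict_word (restrict_word w (S - before gm)) S2)"
    using assms is_prefix_def by blast
  then have "S2 \<subseteq> S - before gm" using Field_restrict_w unfolding init_seg_def by blast
  then show thesis using that S2 by (simp add: Int_absorb1)
qed

lemma not_lex_le_B0_partial_tail_block: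
  assumes s: "s \<in> I" "(gm, s) \<in> A"
    and Z: "init_seg (restrict_word w (block s)) Z" "Z \<noteq> block s"
  shows "\<not> lex_le (restrict_word w B0) (restrict_word w Z)"
proof
  assume le: "lex_le (restrict_word w B0) (restrict_word w Z)"
  have sF: "s \<in> Field A" using s I_subset_Field by blast
  have FZ: "Field (fst (restrict_word w (block s))) = block s" "Z \<subseteq> block s"
    using block_subset_Field[OF sF] Field_restrict_w Z(1) unfolding init_seg_def by blast+
  obtain k where k: "word_iso (restrict_word w (block s)) (restrict_word w Lm) k"
    using tail s word_eq_iff_word_iso by blast
  have "init_seg (restrict_word w Lm) (k ` Z)"
    using word_iso_init_seg[OF k Well_order_restrict_w Well_order_restrict_w Z(1)] .
  then have kZ: "init_seg w (k ` Z)" "k ` Z \<subseteq> Lm"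
    using init_seg_restrict_word_iff[OF Well_order_w Lm(1)] by auto
  have "word_iso (restrict_word w Z) (restrict_word w (k ` Z)) k"
    using word_iso_restrict_word[OF k Well_order_restrict_w Well_order_restrict_w, of Z] FZ kZ(2)
    by (simp add: Int_absorb1 Int_absorb2)
  then have "lex_le (restrict_word w B0) (restrict_word w (k ` Z))"
    using lex_le_word_eq[OF le word_eq_refl] Well_order_restrict_w word_eq_iff_word_iso by blast
  moreover have "k ` Z \<noteq> Lm"
  proof
    assume "k ` Z = Lm"
    then have "k ` Z = k ` block s" using word_isoD(4)[OF k] FZ(1) Lm(1) Field_restrict_w
      unfolding init_seg_def by auto
    then show False
      using Z(2) FZ word_isoD(5)[OF k] inj_on_image_eq_iff[of k "block s" Z "block s"] by auto
  qed
  ultimately show False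
    using not_lex_le_shorter_init_seg[OF Well_order_w init_seg_B0 kZ(1)] kZ(2) Lm(2) by blast
qed

lemma block_subset_prefix_of_tail:
  assumes S2: "init_seg (restrict_word w (S - before gm)) S2"
    and s: "s \<in> I" "(gm, s) \<in> A" and x: "x \<in> S2" "(s, fst x) \<in> A" "fst x \<noteq> s"
  shows "block s \<subseteq> S2"
proof
  fix v assume v: "v \<in> block s"
  have "x \<in> block (fst x)" "fst x \<in> Field A" "s \<in> Field A"
    using x S2 S_memD I_subset_Field s Field_restrict_w unfolding init_seg_def by blast+
  then have "(v, x) \<in> fst w" using v x(2,3) by (cases v, cases x) (auto simp: block_def w_rel)
  moreover have "v \<in> S - before gm" using block_subset_tail[OF s] v by blast
  ultimately show "v \<in> S2" using init_seg_restrict_wordD[OF Well_order_w S2 x(1)] by blast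
qed

lemma full_blocks_of_tail_prefix:
  assumes S2: "init_seg (restrict_word w (S - before gm)) S2" "S2 \<subseteq> S - before gm"
    and eS2: "word_eq (restrict_word w B0) (restrict_word w S2)"
    and gmS2: "block gm \<subseteq> S2"
    and s: "s \<in> I" "(gm, s) \<in> A" "S2 \<inter> block s \<noteq> {}"
  shows "block s \<subseteq> S2"
proof (rule ccontr)
  assume partial: "\<not> block s \<subseteq> S2"
  have bound: "(fst x, s) \<in> A" if "x \<in> S2" for x
    using block_subset_prefix_of_tail[OF S2(1) s(1,2) that] partial that S2(2) S_memD I_subset_Field s
      well_order_total[OF Well_order_A] well_order_refl[OF Well_order_A] by blast
  define Y where "Y = S2 \<inter> before s"
  have FS2: "Field (fst (restrict_word w S2)) = S2"
    using S2(2) S_subset_Field Field_restrict_w by blast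
  have prime: "prime_word (restrict_word w S2)"
    using prime_word_word_eq[OF eS2 Well_order_restrict_w Well_order_restrict_w prime_B0] .
  have Y: "init_seg (restrict_word w S2) Y"
    using init_seg_restrict_word_Int[OF Well_order_w init_seg_before] unfolding Y_def .
  obtain q where "q \<in> block gm" using block_nonempty gm I_subset_Field by blast
  moreover have "s \<noteq> gm" using partial gmS2 by blast
  ultimately have "q \<in> Y" using gmS2 s(2) S2(2) unfolding Y_def before_def by (auto simp: block_def)
  moreover obtain v where v: "v \<in> S2" "v \<in> block s" using s(3) by blast
  moreover have "v \<notin> Y" using v unfolding Y_def before_def by (auto simp: block_def)
  ultimately have "lex_le (restrict_word w S2) (restrict_word w (S2 \<inter> (S2 - Y)))"
    using prime Y unfolding prime_word_def FS2 by auto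
  moreover have "S2 \<inter> (S2 - Y) = S2 \<inter> block s"
    using bound S2(2) S_memD unfolding Y_def before_def by (auto simp: block_def)
  ultimately have "lex_le (restrict_word w S2) (restrict_word w (S2 \<inter> block s))" by simp
  then have "lex_le (restrict_word w B0) (restrict_word w (S2 \<inter> block s))"
    using lex_le_word_eq[OF _ word_eq_sym[OF eS2] word_eq_refl] Well_order_restrict_w by blast
  moreover have "init_seg (restrict_word w (block s)) (S2 \<inter> block s)"
    using init_seg_restrict_word_Int[OF Well_order_restrict_w S2(1), of "block s"]
      block_subset_tail[OF s(1,2)] by (simp add: Int_absorb2 Int_commute)
  ultimately show False using not_lex_le_B0_partial_tail_block[OF s(1,2)] partial by blast
qed

lemma tail_prefix_not_subset_first_block:
  assumes S2: "init_seg (restrict_word w (S - before gm)) S2"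
    and eS2: "word_eq (restrict_word w B0) (restrict_word w S2)" and Lm_B0: "Lm \<noteq> B0"
  shows "\<not> S2 \<subseteq> block gm"
proof
  assume sub: "S2 \<subseteq> block gm"
  have gm_refl: "(gm, gm) \<in> A" using gm I_subset_Field well_order_refl[OF Well_order_A] by blast
  have "init_seg (restrict_word w (block gm)) S2"
    using init_seg_restrict_word_mono[OF Well_order_w S2 sub block_subset_tail[OF gm gm_refl]] .
  then have "is_prefix (restrict_word w S2) (restrict_word w (block gm))"
    using is_prefix_restrict_word[of "restrict_word w (block gm)" S2] sub by (simp add: Int_absorb1)
  then have "is_prefix (restrict_word w B0) (restrict_word w Lm)"
    using is_prefix_word_eq_left[OF eS2] is_prefix_word_eq_right tail gm gm_refl Well_order_restrict_w
    by blast
  then show False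
    using is_prefix_init_seg_subset[OF Well_order_w init_seg_B0 Lm(1)] Lm(2) Lm_B0 by blast
qed

lemma tail_prefix_eq_Sigma:
  assumes S2: "init_seg (restrict_word w (S - before gm)) S2" "S2 \<subseteq> S - before gm"
    and eS2: "word_eq (restrict_word w B0) (restrict_word w S2)" and gmS2: "block gm \<subseteq> S2"
  shows "S2 = Sigma (fst ` S2) (\<lambda>i. Field (fst (u i)))"
proof
  show "S2 \<subseteq> Sigma (fst ` S2) (\<lambda>i. Field (fst (u i)))"
  proof
    fix y assume y: "y \<in> S2"
    then have "y \<in> block (fst y)" using S2(2) S_memD by blast
    then show "y \<in> Sigma (fst ` S2) (\<lambda>i. Field (fst (u i)))"
      using y unfolding block_def by (cases y) (auto intro: rev_image_eqI)
  qed
  show "Sigma (fst ` S2) (\<lambda>i. Field (fst (u i))) \<subseteq> S2"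
  proof
    fix y assume "y \<in> Sigma (fst ` S2) (\<lambda>i. Field (fst (u i)))"
    then obtain z where z: "z \<in> S2" "y \<in> block (fst z)" by (auto simp: block_def)
    then have "fst z \<in> I" "(gm, fst z) \<in> A" "S2 \<inter> block (fst z) \<noteq> {}"
      using S2(2) S_memD S_minus_before_gm by blast+
    then show "y \<in> S2" using full_blocks_of_tail_prefix[OF S2 eS2 gmS2] z(2) by blast
  qed
qed

lemma not_is_prefix_B0_tail:
  assumes Lm_B0: "Lm \<noteq> B0"
  shows "\<not> is_prefix (restrict_word w B0) (restrict_word w (S - before gm))"
proof
  assume "is_prefix (restrict_word w B0) (restrict_word w (S - before gm))"
  then obtain S2 where S2: "init_seg (restrict_word w (S - before gm)) S2" "S2 \<subseteq> S - before gm"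
    and eS2: "word_eq (restrict_word w B0) (restrict_word w S2)"
    using B0_prefix_tailE by blast
  obtain x where x: "x \<in> S2" "x \<notin> block gm"
    using tail_prefix_not_subset_first_block[OF S2(1) eS2 Lm_B0] by blast
  have x_idx: "fst x \<in> I" "(gm, fst x) \<in> A" "fst x \<noteq> gm"
    using x S2(2) S_memD S_minus_before_gm by blast+
  have gm_refl: "(gm, gm) \<in> A" using gm I_subset_Field well_order_refl[OF Well_order_A] by blast
  have gmS2: "block gm \<subseteq> S2" using block_subset_prefix_of_tail[OF S2(1) gm gm_refl x(1) x_idx(2,3)] .
  have "fst ` S2 \<subseteq> I" using S2(2) S_memD by blast
  moreover obtain q where "q \<in> block gm" using block_nonempty gm I_subset_Field by blast
  then have "gm \<in> fst ` S2" using gmS2 unfolding block_def by force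
  ultimately have J: "fst ` S2 \<subseteq> Field A" "gm \<in> fst ` S2" "fst x \<in> fst ` S2"
    using I_subset_Field x(1) by blast+
  have "\<forall>s\<in>fst ` S2. word_eq (u s) (u gm)"
  proof
    fix s assume s: "s \<in> fst ` S2"
    then have sF: "s \<in> Field A" using J(1) by blast
    have "word_eq (u s) (restrict_word w Lm)"
      using word_eq_trans[OF u_word_eq_block[OF sF]] tail S2(2) S_memD S_minus_before_gm s by blast
    moreover have "word_eq (restrict_word w Lm) (u gm)"
      using word_eq_sym[OF word_eq_trans[OF u_word_eq_block]] tail gm gm_refl I_subset_Field by blast
    ultimately show "word_eq (u s) (u gm)" by (rule word_eq_trans)
  qed
  then have "\<not> primitive (restrict_word w S2)"
    using not_primitive_blocks[OF J x_idx(3)[symmetric]] tail_prefix_eq_Sigma[OF S2 eS2 gmS2] by simp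
  moreover have "primitive (restrict_word w S2)"
    using primitive_word_eq[OF eS2] prime_B0 unfolding prime_word_def by blast
  ultimately show False by blast
qed

end

lemma blocks_subset_S_if_no_greatest:
  assumes "\<not> (\<exists>k\<in>I. \<forall>j\<in>I. (j, k) \<in> A)"
  shows "\<forall>b\<in>I. block b \<subseteq> S"
proof
  fix b assume b: "b \<in> I"
  then obtain j where j: "j \<in> I" "(j, b) \<notin> A" using assms by blast
  then have "(b, j) \<in> A" "b \<noteq> j"
    using b I_subset_Field well_order_total[OF Well_order_A] well_order_refl[OF Well_order_A] by blast+
  then show "block b \<subseteq> S" using block_subset_S[OF j(1)] b I_subset_Field by blast
qed

lemma I_eq_b0_if_blocks_word_eq:
  assumes full: "\<forall>b\<in>I. block b \<subseteq> S" and eqs: "\<forall>s\<in>I. word_eq (u s) (u b0)"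
  shows "I = {b0}"
proof (rule ccontr)
  assume "I \<noteq> {b0}"
  then obtain i1 where "i1 \<in> I" "i1 \<noteq> b0" using b0_in_I by blast
  moreover have "S = Sigma I (\<lambda>i. Field (fst (u i)))"
    using full S_memD unfolding block_def by force
  ultimately have "\<not> primitive P" using not_primitive_blocks[OF I_subset_Field b0_in_I] eqs by metis
  then show False using prime_S prime_word_def by blast
qed

lemma I_has_greatest: "\<exists>k\<in>I. \<forall>j\<in>I. (j, k) \<in> A"
proof (rule ccontr)
  assume no_greatest: "\<not> ?thesis"
  note full = blocks_subset_S_if_no_greatest[OF no_greatest]
  have Qdown: "\<forall>g\<in>I. \<forall>d\<in>Field A. (d, g) \<in> A \<longrightarrow> d \<in> I" using I_downward by blast
  have Qpre: "\<forall>g\<in>I. is_prefix (restrict_word w (block g)) (restrict_word w B0)"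
    using partial_blocks_prefix_B0 full by (metis Int_absorb1)
  obtain Lm where L: "shortest_block_prefix I Lm"
    using shortest_block_prefix_exists[OF b0_in_I] by blast
  then have Lm: "init_seg w Lm" "Lm \<subseteq> B0" unfolding shortest_block_prefix_def by blast+
  obtain gm where gm: "gm \<in> I" and egm: "word_eq (restrict_word w (block gm)) (restrict_word w Lm)"
    and first: "\<forall>g\<in>I. word_eq (restrict_word w (block g)) (restrict_word w Lm) \<longrightarrow> (gm, g) \<in> A"
    using shortest_block_prefix_first[OF I_subset_Field L] by blast
  note tail = shortest_block_prefix_tail[OF I_subset_Field Qdown Qpre L gm egm]
  show False
  proof (cases "gm = b0")
    case True
    then have "Lm = B0" using init_seg_eq_if_word_eq[OF Well_order_w init_seg_B0 Lm(1)] egm by blast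
    have "\<forall>s\<in>I. word_eq (u s) (u b0)"
    proof
      fix s assume s: "s \<in> I"
      then have sF: "s \<in> Field A" using I_subset_Field by blast
      have "word_eq (restrict_word w (block s)) (restrict_word w B0)"
        using tail s True b0_least sF \<open>Lm = B0\<close> by blast
      then show "word_eq (u s) (u b0)"
        using word_eq_trans[OF u_word_eq_block[OF sF]] word_eq_sym[OF u_word_eq_block[OF b0_in_A]]
        by (blast intro: word_eq_trans)
    qed
    then have "I = {b0}" using I_eq_b0_if_blocks_word_eq[OF full] by blast
    then show False using no_greatest well_order_refl[OF Well_order_A b0_in_A] by simp
  next
    case False
    have "Lm \<noteq> B0"
      using first egm False b0_in_I b0_least gm I_subset_Field well_order_antisym[OF Well_order_A]
        word_eq_refl by blast
    have "lex_le (restrict_word w B0) (restrict_word w (S - before gm))"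
      using lex_le_is_prefix_left[OF is_prefix_B0_P lex_le_suffix_P] before_proper[OF gm False]
        Well_order_restrict_w by blast
    then show False
      using not_is_prefix_B0_tail[OF gm Lm tail full \<open>Lm \<noteq> B0\<close>] not_str_less_B0_tail[OF gm Lm tail full]
      unfolding lex_le_def by blast
  qed
qed

lemma S_eq_B0: "S = B0"
proof -
  obtain k where "k \<in> I" "\<forall>j\<in>I. (j, k) \<in> A" using I_has_greatest by blast
  then have "\<forall>j\<in>I. j = b0"
    using greatest_index_eq_b0 b0_least I_subset_Field well_order_antisym[OF Well_order_A] by blast
  then have "S \<subseteq> B0" using S_memD by fastforce
  then show ?thesis using B0_subset_S by blast
qed

end

lemma (in dense_prime_product) prime_init_seg_subset_B0:
  assumes S: "init_seg w S" "prime_word (restrict_word w S)"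
  shows "S \<subseteq> B0"
proof (rule ccontr)
  assume "\<not> S \<subseteq> B0"
  then have "B0 \<subseteq> S" using init_seg_linear[OF Well_order_w init_seg_B0 S(1)] by blast
  then interpret prime_prefix A u b0 S using S by unfold_locales
  show False using S_eq_B0 \<open>\<not> S \<subseteq> B0\<close> by blast
qed

theorem mainTheorem8:
  fixes A :: "'i rel" and u :: "'i \<Rightarrow> ('p, 'a::{finite, linorder}) word" and b0 :: 'i
  assumes "Well_order A" and "countable (Field A)"
    and "b0 \<in> Field A" and "\<forall>b\<in>Field A. (b0, b) \<in> A"
    and "\<forall>b\<in>Field A. wf_word (u b) \<and> prime_word (u b)"
    and "dense_nonincr A u"
  shows "is_prefix (u b0) (word_prod A u) \<and>
         (\<forall>S. init_seg (word_prod A u) S \<and> prime_word (restrict_word (word_prod A u) S)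
              \<longrightarrow> is_prefix (restrict_word (word_prod A u) S) (u b0))"
proof -
  interpret dense_prime_product A u b0 using assms by unfold_locales
  have "is_prefix (u b0) w"
    using is_prefix_word_eq_left[OF u_word_eq_block[OF b0_in_A] is_prefix_restrict_word[OF init_seg_B0]] .
  moreover have "is_prefix (restrict_word w S) (u b0)"
    if S: "init_seg w S" "prime_word (restrict_word w S)" for S
  proof -
    have "is_prefix (restrict_word w S) (restrict_word w B0)"
      using is_prefix_restrict_word_subset[OF S(1) init_seg_B0 prime_init_seg_subset_B0[OF S] Well_order_w] .
    then show ?thesis
      using is_prefix_word_eq_right[OF word_eq_sym[OF u_word_eq_block[OF b0_in_A]]]
        Well_order_restrict_w Well_order_u[OF b0_in_A] by blast
  qed
  ultimately show ?thesis unfolding w_def by blast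
qed

end
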